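(* Fix $\nu>0$ and $\Lambda\in\mathscr P_{++}$ with $\Lambda^\theta\in\mathbb{SO}_\nu$. For $\epsilon\ge0$ define the aggregator random field $h^{\epsilon,\nu,\Lambda}_{EZ}(t,\omega,u,w)=uw^\rho+\epsilon e^{\nu t}\Lambda_t(\omega)^\theta$. Fix $\epsilon_2>0$ and $0\le\epsilon_1\le\epsilon_2$. Let $U^1,U^2\in\mathscr P_+$ satisfy $U^1\le U^2\le\Lambda$. Suppose $W^1$ is a subsolution for $(h^{\epsilon_1,\nu,\Lambda}_{EZ},U^1)$ and $W^2$ is a supersolution for $(h^{\epsilon_2,\nu,\Lambda}_{EZ},U^2)$, both with values in $[0,\infty)$, and that $(W^1,W^2)$ satisfies Condition A for $(h^{\epsilon_1,\nu,\Lambda}_{EZ},U^1)$. Then $W^1_\sigma\le W^2_\sigma$ for all finite stopping times $\sigma\ge0$.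
   Context: Work on a filtered probability space $(\Omega,\mathcal F,(\mathcal F_t)_{t\ge0},\mathbb P)$ with complete continuous filtration and trivial $\mathcal F_0$. $\mathscr P$ denotes progressively measurable processes, $\mathscr P_+$ (resp. $\mathscr P_{++}$) nonnegative (resp. strictly positive) ones. $\theta>1$ is fixed and $\rho=\frac{\theta-1}{\theta}$. For $X\in\mathscr P_+$, $J^X_t=\mathbb E[\int_t^\infty X_sds\mid\mathcal F_t]$. $\mathbb{SO}$ is the set of $X\in\mathscr P_{++}$ with $\mathbb E\int_0^\infty X_tdt<\infty$ such that $kJ^X\le X\le KJ^X$ for constants $0<k\le K<\infty$; $\mathbb{SO}_\nu$ is the set of $X\in\mathbb{SO}$ with $(e^{\nu t}X_t)_{t\ge0}\in\mathbb{SO}$. For an aggregator random field $g(t,\omega,u,w)$ with values in $[0,\infty)$ and $U\in\mathscr P_+$: $\mathbb I(g,U)=\{W\in\mathscr P:\mathbb E\int_0^\infty|g(s,\omega,U_s,W_s)|ds<\infty\}$, $\mathbb{UI}(g,U)$ its uniformly integrable elements. A $[0,\infty)$-valued optional process $W$ with right limits $W_{t+}$ is a subsolution for $(g,U)$ if $\limsup_{t\to\infty}\mathbb E[W_{t+}]\le0$ and $W_\sigma\le\mathbb E[W_{\tau+}+\int_\sigma^\tau g(s,\omega,U_s,W_s)ds\mid\mathcal F_\sigma]$ for all bounded stopping times $\sigma\le\tau$; a supersolution if $\liminf_{t\to\infty}\mathbb E[W_{t+}]\ge0$ and the reverse inequality holds for all bounded stopping times $\sigma\le\tau$. The pair $(W^1,W^2)$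 satisfies Condition A for $(g,U)$ if either $W^1$ or $W^2$ belongs to $\mathbb{UI}(g,U)$ and $(W^1-W^2)^+$ is bounded in $L^1$. *)

theory Defs
  imports "HOL-Probability.Probability"
begin

(* Setting: M is the probability space (\<Omega>, F, P); the filtration is F :: real \<Rightarrow> 'a measure,
   only times t \<ge> 0 are relevant. *)

definition std_filtration :: "'a measure \<Rightarrow> (real \<Rightarrow> 'a measure) \<Rightarrow> bool" where
  "std_filtration M F \<longleftrightarrow>
     prob_space M \<and>
     (\<forall>t\<ge>0. space (F t) = space M \<and> sets (F t) \<subseteq> sets M) \<and>
     (\<forall>s t. 0 \<le> s \<and> s \<le> t \<longrightarrow> sets (F s) \<subseteq> sets (F t)) \<and>
     \<comment> \<open>complete: F_0 contains all subsets of P-null sets\<close>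
     (\<forall>N\<in>null_sets M. \<forall>A. A \<subseteq> N \<longrightarrow> A \<in> sets (F 0)) \<and>
     \<comment> \<open>continuous: right-continuous and left-continuous\<close>
     (\<forall>t\<ge>0. sets (F t) = (\<Inter>s\<in>{t<..}. sets (F s))) \<and>
     (\<forall>t>0. sets (F t) = sets (sigma (space M) (\<Union>s\<in>{0..<t}. sets (F s)))) \<and>
     \<comment> \<open>trivial F_0\<close>
     (\<forall>A\<in>sets (F 0). measure M A = 0 \<or> measure M A = 1)"

definition progressive :: "'a measure \<Rightarrow> (real \<Rightarrow> 'a measure) \<Rightarrow> (real \<Rightarrow> 'a \<Rightarrow> real) \<Rightarrow> bool" where
  "progressive M F X \<longleftrightarrow>
     (\<forall>t\<ge>0. (\<lambda>(s, \<omega>). X s \<omega>) \<in> borel_measurable (restrict_space borel {0..t} \<Otimes>\<^sub>M F t))"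

definition progressive_nonneg :: "'a measure \<Rightarrow> (real \<Rightarrow> 'a measure) \<Rightarrow> (real \<Rightarrow> 'a \<Rightarrow> real) \<Rightarrow> bool" where
  "progressive_nonneg M F X \<longleftrightarrow> progressive M F X \<and> (\<forall>t\<ge>0. \<forall>\<omega>\<in>space M. 0 \<le> X t \<omega>)"

definition progressive_pos :: "'a measure \<Rightarrow> (real \<Rightarrow> 'a measure) \<Rightarrow> (real \<Rightarrow> 'a \<Rightarrow> real) \<Rightarrow> bool" where
  "progressive_pos M F X \<longleftrightarrow> progressive M F X \<and> (\<forall>t\<ge>0. \<forall>\<omega>\<in>space M. 0 < X t \<omega>)"

definition Jproc :: "'a measure \<Rightarrow> (real \<Rightarrow> 'a measure) \<Rightarrow> (real \<Rightarrow> 'a \<Rightarrow> real) \<Rightarrow> real \<Rightarrow> 'a \<Rightarrow> ennreal" where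
  "Jproc M F X t = nn_cond_exp M (F t) (\<lambda>\<omega>. \<integral>\<^sup>+ s\<in>{t..}. ennreal (X s \<omega>) \<partial>lborel)"

definition SO :: "'a measure \<Rightarrow> (real \<Rightarrow> 'a measure) \<Rightarrow> (real \<Rightarrow> 'a \<Rightarrow> real) \<Rightarrow> bool" where
  "SO M F X \<longleftrightarrow> progressive_pos M F X \<and>
     (\<integral>\<^sup>+ \<omega>. (\<integral>\<^sup>+ s\<in>{0..}. ennreal (X s \<omega>) \<partial>lborel) \<partial>M) < \<infinity> \<and>
     (\<exists>k K::real. 0 < k \<and> k \<le> K \<and>
        (\<forall>t\<ge>0. AE \<omega> in M. ennreal k * Jproc M F X t \<omega> \<le> ennreal (X t \<omega>)
                          \<and> ennreal (X t \<omega>) \<le> ennreal K * Jproc M F X t \<omega>))"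

definition SO_nu :: "'a measure \<Rightarrow> (real \<Rightarrow> 'a measure) \<Rightarrow> real \<Rightarrow> (real \<Rightarrow> 'a \<Rightarrow> real) \<Rightarrow> bool" where
  "SO_nu M F \<nu> X \<longleftrightarrow> SO M F X \<and> SO M F (\<lambda>t \<omega>. exp (\<nu> * t) * X t \<omega>)"

definition stopping_time_on :: "'a measure \<Rightarrow> (real \<Rightarrow> 'a measure) \<Rightarrow> ('a \<Rightarrow> real) \<Rightarrow> bool" where
  "stopping_time_on M F \<sigma> \<longleftrightarrow> (\<forall>\<omega>\<in>space M. 0 \<le> \<sigma> \<omega>) \<and>
     (\<forall>t\<ge>0. {\<omega>\<in>space M. \<sigma> \<omega> \<le> t} \<in> sets (F t))"

definition bounded_stopping_time :: "'a measure \<Rightarrow> (real \<Rightarrow> 'a measure) \<Rightarrow> ('a \<Rightarrow> real) \<Rightarrow> bool" where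
  "bounded_stopping_time M F \<sigma> \<longleftrightarrow> stopping_time_on M F \<sigma> \<and> (\<exists>C. \<forall>\<omega>\<in>space M. \<sigma> \<omega> \<le> C)"

definition stopped_sigma :: "'a measure \<Rightarrow> (real \<Rightarrow> 'a measure) \<Rightarrow> ('a \<Rightarrow> real) \<Rightarrow> 'a measure" where
  "stopped_sigma M F \<sigma> = sigma (space M)
     {A \<in> sets M. \<forall>t\<ge>0. A \<inter> {\<omega>\<in>space M. \<sigma> \<omega> \<le> t} \<in> sets (F t)}"

definition optional_sets :: "'a measure \<Rightarrow> (real \<Rightarrow> 'a measure) \<Rightarrow> (real \<times> 'a) measure" where
  "optional_sets M F = sigma ({0..} \<times> space M)
     {{(t, \<omega>). 0 \<le> t \<and> \<omega> \<in> space M \<and> \<sigma> \<omega> \<le> t} | \<sigma>. stopping_time_on M F \<sigma>}"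

definition optional :: "'a measure \<Rightarrow> (real \<Rightarrow> 'a measure) \<Rightarrow> (real \<Rightarrow> 'a \<Rightarrow> real) \<Rightarrow> bool" where
  "optional M F W \<longleftrightarrow> (\<lambda>(t, \<omega>). W t \<omega>) \<in> borel_measurable (optional_sets M F)"

definition has_right_limits :: "'a measure \<Rightarrow> (real \<Rightarrow> 'a \<Rightarrow> real) \<Rightarrow> bool" where
  "has_right_limits M W \<longleftrightarrow>
     (\<forall>\<omega>\<in>space M. \<forall>t\<ge>0. \<exists>l. ((\<lambda>s. W s \<omega>) \<longlongrightarrow> l) (at_right t))"

definition rlim :: "(real \<Rightarrow> 'a \<Rightarrow> real) \<Rightarrow> real \<Rightarrow> 'a \<Rightarrow> real" where
  "rlim W t \<omega> = Lim (at_right t) (\<lambda>s. W s \<omega>)"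

type_synonym 'a aggregator = "real \<Rightarrow> 'a \<Rightarrow> real \<Rightarrow> real \<Rightarrow> real"

definition subsolution :: "'a measure \<Rightarrow> (real \<Rightarrow> 'a measure) \<Rightarrow> 'a aggregator
     \<Rightarrow> (real \<Rightarrow> 'a \<Rightarrow> real) \<Rightarrow> (real \<Rightarrow> 'a \<Rightarrow> real) \<Rightarrow> bool" where
  "subsolution M F g U W \<longleftrightarrow>
     optional M F W \<and> has_right_limits M W \<and> (\<forall>t\<ge>0. \<forall>\<omega>\<in>space M. 0 \<le> W t \<omega>) \<and>
     Limsup at_top (\<lambda>t::real. \<integral>\<^sup>+ \<omega>. ennreal (rlim W t \<omega>) \<partial>M) \<le> 0 \<and>
     (\<forall>\<sigma> \<tau>. bounded_stopping_time M F \<sigma> \<and> bounded_stopping_time M F \<tau> \<and>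
        (\<forall>\<omega>\<in>space M. \<sigma> \<omega> \<le> \<tau> \<omega>) \<longrightarrow>
        (AE \<omega> in M. ennreal (W (\<sigma> \<omega>) \<omega>) \<le>
           nn_cond_exp M (stopped_sigma M F \<sigma>)
             (\<lambda>\<omega>. ennreal (rlim W (\<tau> \<omega>) \<omega>) +
                   (\<integral>\<^sup>+ s\<in>{\<sigma> \<omega>..\<tau> \<omega>}. ennreal (g s \<omega> (U s \<omega>) (W s \<omega>)) \<partial>lborel)) \<omega>))"

definition supersolution :: "'a measure \<Rightarrow> (real \<Rightarrow> 'a measure) \<Rightarrow> 'a aggregator
     \<Rightarrow> (real \<Rightarrow> 'a \<Rightarrow> real) \<Rightarrow> (real \<Rightarrow> 'a \<Rightarrow> real) \<Rightarrow> bool" where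
  "supersolution M F g U W \<longleftrightarrow>
     optional M F W \<and> has_right_limits M W \<and> (\<forall>t\<ge>0. \<forall>\<omega>\<in>space M. 0 \<le> W t \<omega>) \<and>
     Liminf at_top (\<lambda>t::real. \<integral>\<^sup>+ \<omega>. ennreal (rlim W t \<omega>) \<partial>M) \<ge> 0 \<and>
     (\<forall>\<sigma> \<tau>. bounded_stopping_time M F \<sigma> \<and> bounded_stopping_time M F \<tau> \<and>
        (\<forall>\<omega>\<in>space M. \<sigma> \<omega> \<le> \<tau> \<omega>) \<longrightarrow>
        (AE \<omega> in M. ennreal (W (\<sigma> \<omega>) \<omega>) \<ge>
           nn_cond_exp M (stopped_sigma M F \<sigma>)
             (\<lambda>\<omega>. ennreal (rlim W (\<tau> \<omega>) \<omega>) +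
                   (\<integral>\<^sup>+ s\<in>{\<sigma> \<omega>..\<tau> \<omega>}. ennreal (g s \<omega> (U s \<omega>) (W s \<omega>)) \<partial>lborel)) \<omega>))"

definition in_I :: "'a measure \<Rightarrow> (real \<Rightarrow> 'a measure) \<Rightarrow> 'a aggregator
     \<Rightarrow> (real \<Rightarrow> 'a \<Rightarrow> real) \<Rightarrow> (real \<Rightarrow> 'a \<Rightarrow> real) \<Rightarrow> bool" where
  "in_I M F g U W \<longleftrightarrow> progressive M F W \<and>
     (\<integral>\<^sup>+ \<omega>. (\<integral>\<^sup>+ s\<in>{0..}. ennreal \<bar>g s \<omega> (U s \<omega>) (W s \<omega>)\<bar> \<partial>lborel) \<partial>M) < \<infinity>"

definition unif_integrable_proc :: "'a measure \<Rightarrow> (real \<Rightarrow> 'a \<Rightarrow> real) \<Rightarrow> bool" where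
  "unif_integrable_proc M W \<longleftrightarrow> (\<forall>t\<ge>0. W t \<in> borel_measurable M) \<and>
     ((\<lambda>c. SUP t\<in>{0..}. \<integral>\<^sup>+ \<omega>. ennreal \<bar>W t \<omega>\<bar> * indicator {\<omega>\<in>space M. c < \<bar>W t \<omega>\<bar>} \<omega> \<partial>M)
        \<longlongrightarrow> 0) at_top"

definition in_UI :: "'a measure \<Rightarrow> (real \<Rightarrow> 'a measure) \<Rightarrow> 'a aggregator
     \<Rightarrow> (real \<Rightarrow> 'a \<Rightarrow> real) \<Rightarrow> (real \<Rightarrow> 'a \<Rightarrow> real) \<Rightarrow> bool" where
  "in_UI M F g U W \<longleftrightarrow> in_I M F g U W \<and> unif_integrable_proc M W"

definition conditionA :: "'a measure \<Rightarrow> (real \<Rightarrow> 'a measure) \<Rightarrow> 'a aggregator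
     \<Rightarrow> (real \<Rightarrow> 'a \<Rightarrow> real) \<Rightarrow> (real \<Rightarrow> 'a \<Rightarrow> real) \<Rightarrow> (real \<Rightarrow> 'a \<Rightarrow> real) \<Rightarrow> bool" where
  "conditionA M F g U W1 W2 \<longleftrightarrow>
     (in_UI M F g U W1 \<or> in_UI M F g U W2) \<and>
     (\<exists>C::real. \<forall>t\<ge>0. (\<integral>\<^sup>+ \<omega>. ennreal (max 0 (W1 t \<omega> - W2 t \<omega>)) \<partial>M) \<le> ennreal C)"

text \<open>Epstein--Zin aggregator h^{eps,nu,Lambda}_EZ with rho = (theta-1)/theta.\<close>
definition hEZ :: "real \<Rightarrow> real \<Rightarrow> real \<Rightarrow> (real \<Rightarrow> 'a \<Rightarrow> real) \<Rightarrow> 'a aggregator" where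
  "hEZ \<theta> \<epsilon> \<nu> \<Lambda> t \<omega> u w = u * w powr ((\<theta> - 1) / \<theta>) + \<epsilon> * exp (\<nu> * t) * \<Lambda> t \<omega> powr \<theta>"

end

theory Submission
  imports Defs
begin

text \<open>
  Write \<open>\<Delta> = (W1 - W2)\<^sup>+\<close> and \<open>Y\<^sub>t = e\<^sup>\<nu>\<^sup>t \<Lambda>\<^sub>t\<^sup>\<theta>\<close>. The second aggregator dominates \<open>\<epsilon>2 Y\<close>,
  so the supersolution dominates \<open>\<epsilon>2 J\<^sup>Y\<close>, which is comparable to \<open>Y\<close> because \<open>Y \<in> SO\<close>;
  hence \<open>W2 \<ge> c Y\<close>. Where \<open>w \<ge> c Y\<^sub>t\<close> and \<open>u \<le> \<Lambda>\<^sub>t\<close>, the map \<open>w \<mapsto> u w\<^sup>\<rho>\<close> has slope at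
  most \<open>\<beta>\<^sub>t = (c e\<^sup>\<nu>\<^sup>t)\<^sup>-\<^sup>1\<^sup>/\<^sup>\<theta>\<close>, so \<open>h1(U1, W1) \<le> h2(U2, W2) + \<beta> \<Delta>\<close>. Subtracting the sub- and
  supersolution inequalities between a stopping time \<open>\<sigma> \<ge> a\<close> and a deterministic time \<open>T\<close>,
  and letting \<open>T \<rightarrow> \<infinity>\<close> by the transversality condition of \<open>W1\<close>, gives
  \<open>E \<Delta>\<^sub>\<sigma> \<le> \<integral>\<^sub>a\<^sup>\<infinity> \<beta>\<^sub>r E \<Delta>\<^sub>r dr\<close>. As \<open>\<beta>\<close> is bounded and integrable and \<open>E \<Delta>\<close> is bounded, a
  backward Gronwall argument yields \<open>E \<Delta> = 0\<close>, hence \<open>\<Delta>\<^sub>\<sigma> = 0\<close> a.s.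
\<close>

lemma ennreal_max_0_diff_le:
  fixes x y :: real and z :: ennreal
  assumes "ennreal x \<le> ennreal y + z" "0 \<le> y"
  shows "ennreal (max 0 (x - y)) \<le> z"
proof (cases "x \<le> y")
  case False
  then have "ennreal y + ennreal (x - y) \<le> ennreal y + z"
    using assms by (simp flip: ennreal_plus)
  then show ?thesis using False by (simp add: max_def)
qed simp

lemma ennreal_add_le: "0 \<le> b \<Longrightarrow> ennreal (a + b) \<le> ennreal a + ennreal b"
  by (cases "0 \<le> a") (auto simp: ennreal_neg intro: ennreal_leI)

lemma (in sigma_finite_subalgebra) nn_cond_exp_monotone_convergence:
  assumes meas[measurable]: "\<And>n. f n \<in> borel_measurable M"
    and inc: "\<And>n x. f n x \<le> f (Suc n) x"
  shows "AE x in M. (SUP n. nn_cond_exp M F (f n) x) = nn_cond_exp M F (\<lambda>x. SUP n. f n x) x"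
proof (rule nn_cond_exp_charact)
  show "(\<lambda>x. SUP n. f n x) \<in> borel_measurable M" by measurable
  show "(\<lambda>x. SUP n. nn_cond_exp M F (f n) x) \<in> borel_measurable F"
    by (rule borel_measurable_SUP) (simp_all add: borel_measurable_nn_cond_exp)
  have mono: "AE x in M. nn_cond_exp M F (f n) x \<le> nn_cond_exp M F (f (Suc n)) x" for n
    by (rule nn_cond_exp_mono) (simp_all add: inc)
  fix A assume A: "A \<in> sets F"
  then have AM[measurable]: "A \<in> sets M" by (meson subalg subalgebra_def subsetD)
  have "(\<integral>\<^sup>+ x\<in>A. (SUP n. f n x) \<partial>M) = (\<integral>\<^sup>+ x. (SUP n. f n x * indicator A x) \<partial>M)"
    by (intro nn_integral_cong) (simp split: split_indicator)
  also have "\<dots> = (SUP n. \<integral>\<^sup>+ x. f n x * indicator A x \<partial>M)"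
    by (rule nn_integral_monotone_convergence_SUP_AE)
      (simp_all add: inc mult_right_mono)
  also have "\<dots> = (SUP n. \<integral>\<^sup>+ x. indicator A x * nn_cond_exp M F (f n) x \<partial>M)"
    using nn_cond_exp_intg[OF borel_measurable_indicator[OF A] meas] by (simp add: mult.commute)
  also have "\<dots> = (\<integral>\<^sup>+ x. (SUP n. indicator A x * nn_cond_exp M F (f n) x) \<partial>M)"
  proof (rule nn_integral_monotone_convergence_SUP_AE[symmetric])
    show "AE x in M. indicator A x * nn_cond_exp M F (f n) x
        \<le> indicator A x * nn_cond_exp M F (f (Suc n)) x" for n
      using mono[of n] by eventually_elim (rule mult_left_mono, simp_all)
  qed (simp add: borel_measurable_nn_cond_exp2)
  also have "\<dots> = (\<integral>\<^sup>+ x\<in>A. (SUP n. nn_cond_exp M F (f n) x) \<partial>M)"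
    by (intro nn_integral_cong) (simp split: split_indicator)
  finally show "(\<integral>\<^sup>+ x\<in>A. (SUP n. f n x) \<partial>M) = (\<integral>\<^sup>+ x\<in>A. (SUP n. nn_cond_exp M F (f n) x) \<partial>M)" .
qed

lemma (in sigma_finite_subalgebra) nn_cond_exp_pos_diff_le:
  assumes [measurable]: "f \<in> borel_measurable M" "g \<in> borel_measurable M" "h \<in> borel_measurable M"
    and fgh: "AE x in M. f x \<le> g x + h x"
    and X: "AE x in M. ennreal (X x) \<le> nn_cond_exp M F f x"
    and Y: "AE x in M. nn_cond_exp M F g x \<le> ennreal (Y x)"
    and Y_nonneg: "\<And>x. x \<in> space M \<Longrightarrow> 0 \<le> Y x"
  shows "AE x in M. ennreal (max 0 (X x - Y x)) \<le> nn_cond_exp M F h x"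
proof -
  have "AE x in M. nn_cond_exp M F f x \<le> nn_cond_exp M F (\<lambda>x. g x + h x) x"
    by (rule nn_cond_exp_mono[OF fgh]) measurable
  moreover have "AE x in M. nn_cond_exp M F g x + nn_cond_exp M F h x = nn_cond_exp M F (\<lambda>x. g x + h x) x"
    by (rule nn_cond_exp_sum) measurable
  ultimately show ?thesis using X Y AE_space
  proof eventually_elim
    case (elim x)
    have "ennreal (X x) \<le> nn_cond_exp M F (\<lambda>x. g x + h x) x" using elim(3,1) by (rule order_trans)
    also have "\<dots> = nn_cond_exp M F g x + nn_cond_exp M F h x" using elim(2) by simp
    also have "\<dots> \<le> ennreal (Y x) + nn_cond_exp M F h x" using elim(4) by (rule add_right_mono)
    finally show ?case by (rule ennreal_max_0_diff_le) (rule Y_nonneg[OF elim(5)])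
  qed
qed

lemma nn_integral_atLeast_SUP:
  fixes f :: "real \<Rightarrow> ennreal"
  assumes f: "\<And>n. (\<lambda>r. f r * indicator {s..s + real n} r) \<in> borel_measurable lborel"
  shows "(SUP n. \<integral>\<^sup>+ r\<in>{s..s + real n}. f r \<partial>lborel) = (\<integral>\<^sup>+ r\<in>{s..}. f r \<partial>lborel)"
proof -
  have "(SUP n. \<integral>\<^sup>+ r\<in>{s..s + real n}. f r \<partial>lborel)
      = (\<integral>\<^sup>+ r. (SUP n. f r * indicator {s..s + real n} r) \<partial>lborel)"
  proof (rule nn_integral_monotone_convergence_SUP[symmetric])
    show "incseq (\<lambda>n r. f r * indicator {s..s + real n} r)"
      by (intro incseq_SucI le_funI) (auto split: split_indicator)
  qed (rule f)
  also have "\<dots> = (\<integral>\<^sup>+ r\<in>{s..}. f r \<partial>lborel)"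
  proof (intro nn_integral_cong)
    fix r
    obtain m :: nat where "r - s \<le> real m" using real_arch_simple by blast
    then have "f r * indicator {s..} r \<le> (SUP n. f r * indicator {s..s + real n} r)"
      by (intro SUP_upper2[of m]) (auto split: split_indicator)
    then show "(SUP n. f r * indicator {s..s + real n} r) = f r * indicator {s..} r"
      by (intro antisym SUP_least) (auto split: split_indicator)
  qed
  finally show ?thesis .
qed

lemma std_filtrationD:
  assumes "std_filtration M F"
  shows std_filtration_prob_space: "prob_space M"
    and std_filtration_space: "0 \<le> t \<Longrightarrow> space (F t) = space M"
    and std_filtration_sets: "0 \<le> t \<Longrightarrow> sets (F t) \<subseteq> sets M"
    and std_filtration_mono: "0 \<le> s \<Longrightarrow> s \<le> t \<Longrightarrow> sets (F s) \<subseteq> sets (F t)"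
proof -
  note D = assms[unfolded std_filtration_def]
  from D show "prob_space M" by (rule conjunct1)
  from D[THEN conjunct2, THEN conjunct1]
  show "0 \<le> t \<Longrightarrow> space (F t) = space M" and "0 \<le> t \<Longrightarrow> sets (F t) \<subseteq> sets M"
    by simp_all
  from D[THEN conjunct2, THEN conjunct2, THEN conjunct1]
  show "0 \<le> s \<Longrightarrow> s \<le> t \<Longrightarrow> sets (F s) \<subseteq> sets (F t)" by simp
qed

lemma measurable_into_filtration:
  assumes "std_filtration M F" "0 \<le> t" "f \<in> measurable N M"
  shows "f \<in> measurable N (F t)"
  using measurable_mono[of "F t" M N N] assms
    std_filtration_space[OF assms(1,2)] std_filtration_sets[OF assms(1,2)] by auto

lemma stopping_time_on_nonneg: "stopping_time_on M F \<sigma> \<Longrightarrow> \<omega> \<in> space M \<Longrightarrow> 0 \<le> \<sigma> \<omega>"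
  unfolding stopping_time_on_def by blast

lemma borel_measurable_stopping_time_on:
  assumes filt: "std_filtration M F" and \<sigma>: "stopping_time_on M F \<sigma>"
  shows "\<sigma> \<in> borel_measurable M"
proof (subst borel_measurable_iff_le, intro allI)
  fix a :: real
  show "{\<omega> \<in> space M. \<sigma> \<omega> \<le> a} \<in> sets M"
  proof (cases "a < 0")
    case True
    then have "{\<omega> \<in> space M. \<sigma> \<omega> \<le> a} = {}"
      using stopping_time_on_nonneg[OF \<sigma>] by force
    then show ?thesis by (metis sets.empty_sets)
  next
    case False
    then have "{\<omega> \<in> space M. \<sigma> \<omega> \<le> a} \<in> sets (F a)"
      using \<sigma> unfolding stopping_time_on_def by simp
    moreover have "sets (F a) \<subseteq> sets M" using std_filtration_sets[OF filt] False by simp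
    ultimately show ?thesis by blast
  qed
qed

lemma bounded_stopping_time_const:
  assumes filt: "std_filtration M F" and c: "0 \<le> c"
  shows "bounded_stopping_time M F (\<lambda>_. c)"
  unfolding bounded_stopping_time_def stopping_time_on_def
proof (intro conjI ballI allI impI exI)
  fix t :: real assume t: "0 \<le> t"
  show "{\<omega> \<in> space M. c \<le> t} \<in> sets (F t)"
  proof (cases "c \<le> t")
    case True
    then show ?thesis using sets.top[of "F t"] std_filtration_space[OF filt t] by simp
  qed simp
qed (rule c, rule order_refl)

lemma bounded_stopping_time_min:
  assumes filt: "std_filtration M F" and \<sigma>: "stopping_time_on M F \<sigma>" and c: "0 \<le> c"
  shows "bounded_stopping_time M F (\<lambda>\<omega>. min (\<sigma> \<omega>) c)"
  unfolding bounded_stopping_time_def stopping_time_on_def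
proof (intro conjI ballI allI impI exI)
  fix \<omega> assume "\<omega> \<in> space M"
  then show "0 \<le> min (\<sigma> \<omega>) c" using stopping_time_on_nonneg[OF \<sigma>] c by simp
next
  fix t :: real assume t: "0 \<le> t"
  show "{\<omega> \<in> space M. min (\<sigma> \<omega>) c \<le> t} \<in> sets (F t)"
  proof (cases "c \<le> t")
    case True
    then have "{\<omega> \<in> space M. min (\<sigma> \<omega>) c \<le> t} = space (F t)"
      using std_filtration_space[OF filt t] by auto
    then show ?thesis by simp
  next
    case False
    then have "{\<omega> \<in> space M. min (\<sigma> \<omega>) c \<le> t} = {\<omega> \<in> space M. \<sigma> \<omega> \<le> t}" by auto
    moreover have "{\<omega> \<in> space M. \<sigma> \<omega> \<le> t} \<in> sets (F t)"
      using \<sigma> t unfolding stopping_time_on_def by blast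
    ultimately show ?thesis by simp
  qed
next
  fix \<omega> show "min (\<sigma> \<omega>) c \<le> c" by simp
qed

lemma subalgebra_stopped_sigma: "subalgebra M (stopped_sigma M F \<sigma>)"
proof -
  let ?C = "{A \<in> sets M. \<forall>t\<ge>0. A \<inter> {\<omega>\<in>space M. \<sigma> \<omega> \<le> t} \<in> sets (F t)}"
  have "?C \<subseteq> Pow (space M)" using sets.sets_into_space by blast
  then have "sets (stopped_sigma M F \<sigma>) = sigma_sets (space M) ?C"
    unfolding stopped_sigma_def by (rule sets_measure_of)
  also have "\<dots> \<subseteq> sets M" by (rule sets.sigma_sets_subset) blast
  moreover have "space (stopped_sigma M F \<sigma>) = space M"
    unfolding stopped_sigma_def by (rule space_measure_of_conv)
  ultimately show ?thesis unfolding subalgebra_def by blast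
qed

lemma sigma_finite_subalgebra_stopped_sigma:
  assumes "prob_space M"
  shows "sigma_finite_subalgebra M (stopped_sigma M F \<sigma>)"
proof -
  interpret prob_space M by (fact assms)
  show ?thesis
    by (intro finite_measure_subalgebra_is_sigma_finite)
      (simp add: finite_measure_subalgebra_def finite_measure_subalgebra_axioms_def
        subalgebra_stopped_sigma finite_measure_axioms)
qed

lemma sets_stopped_sigma_const:
  assumes filt: "std_filtration M F" and t: "0 \<le> t"
  shows "sets (stopped_sigma M F (\<lambda>_. t)) = sets (F t)"
proof -
  let ?C = "{A \<in> sets M. \<forall>s\<ge>0. A \<inter> {\<omega>\<in>space M. t \<le> s} \<in> sets (F s)}"
  have C_eq: "?C = sets (F t)"
  proof (intro equalityI subsetI)
    fix A assume A: "A \<in> ?C"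
    then have "A \<inter> {\<omega>\<in>space M. t \<le> t} \<in> sets (F t)" using t by blast
    moreover have "A \<inter> {\<omega>\<in>space M. t \<le> t} = A"
      using A sets.sets_into_space by blast
    ultimately show "A \<in> sets (F t)" by simp
  next
    fix A assume A: "A \<in> sets (F t)"
    then have AM: "A \<in> sets M" using std_filtration_sets[OF filt t] by blast
    have "A \<inter> {\<omega>\<in>space M. t \<le> s} \<in> sets (F s)" if "0 \<le> s" for s
    proof (cases "t \<le> s")
      case True
      then have "A \<inter> {\<omega>\<in>space M. t \<le> s} = A" using AM sets.sets_into_space by blast
      then show ?thesis using A std_filtration_mono[OF filt t True] by auto
    qed simp
    then show "A \<in> ?C" using AM by blast
  qed
  have "?C \<subseteq> Pow (space M)" using sets.sets_into_space by blast
  then have "sets (stopped_sigma M F (\<lambda>_. t)) = sigma_sets (space M) ?C"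
    unfolding stopped_sigma_def by (rule sets_measure_of)
  also have "\<dots> = sigma_sets (space (F t)) (sets (F t))"
    unfolding C_eq std_filtration_space[OF filt t] ..
  also have "\<dots> = sets (F t)" by (rule sets.sigma_sets_eq)
  finally show ?thesis .
qed

lemma nn_cond_exp_stopped_sigma_const:
  assumes filt: "std_filtration M F" and t: "0 \<le> t"
  shows "nn_cond_exp M (stopped_sigma M F (\<lambda>_. t)) = nn_cond_exp M (F t)"
proof -
  have "space (stopped_sigma M F (\<lambda>_. t)) = space (F t)"
    unfolding stopped_sigma_def std_filtration_space[OF filt t] by (rule space_measure_of_conv)
  then show ?thesis
    unfolding nn_cond_exp_def subalgebra_def restr_to_subalg_def sets_stopped_sigma_const[OF filt t]
    by simp
qed

lemma measurable_optional_comp: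
  assumes filt: "std_filtration M F" and opt: "optional M F W"
    and a: "a \<in> borel_measurable N" and b: "b \<in> measurable N M"
    and a_nonneg: "\<And>x. x \<in> space N \<Longrightarrow> 0 \<le> a x"
  shows "(\<lambda>x. W (a x) (b x)) \<in> borel_measurable N"
proof -
  have "(\<lambda>x. (a x, b x)) \<in> measurable N (optional_sets M F)"
    unfolding optional_sets_def
  proof (rule measurable_measure_of)
    show "(\<lambda>x. (a x, b x)) \<in> space N \<rightarrow> {0..} \<times> space M"
      using a_nonneg measurable_space[OF b] by auto
    fix A assume "A \<in> {{(t, \<omega>). 0 \<le> t \<and> \<omega> \<in> space M \<and> \<sigma> \<omega> \<le> t} |\<sigma>. stopping_time_on M F \<sigma>}"
    then obtain \<sigma> where \<sigma>: "stopping_time_on M F \<sigma>"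
      and A: "A = {(t, \<omega>). 0 \<le> t \<and> \<omega> \<in> space M \<and> \<sigma> \<omega> \<le> t}" by auto
    have [measurable]: "\<sigma> \<in> borel_measurable M" by (rule borel_measurable_stopping_time_on[OF filt \<sigma>])
    have [measurable]: "a \<in> borel_measurable N" "b \<in> measurable N M" using a b by auto
    have "(\<lambda>x. (a x, b x)) -` A \<inter> space N = {x \<in> space N. \<sigma> (b x) \<le> a x}"
      using A a_nonneg measurable_space[OF b] by auto
    also have "\<dots> \<in> sets N" by measurable
    finally show "(\<lambda>x. (a x, b x)) -` A \<inter> space N \<in> sets N" .
  qed auto
  from measurable_compose[OF this opt[unfolded optional_def]] show ?thesis by simp
qed

lemma measurable_progressive_comp:
  assumes filt: "std_filtration M F" and prog: "progressive M F X"
    and a: "a \<in> borel_measurable N" and b: "b \<in> measurable N M"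
    and a_nonneg: "\<And>x. x \<in> space N \<Longrightarrow> 0 \<le> a x"
  shows "(\<lambda>x. X (a x) (b x)) \<in> borel_measurable N"
proof (rule borel_measurable_LIMSEQ_real)
  fix n :: nat
  have "(\<lambda>x. (min (a x) (real n), b x)) \<in> measurable N (restrict_space borel {0..real n} \<Otimes>\<^sub>M F (real n))"
  proof (rule measurable_Pair)
    show "(\<lambda>x. min (a x) (real n)) \<in> measurable N (restrict_space borel {0..real n})"
      by (rule measurable_restrict_space2) (use a_nonneg a in auto)
    show "b \<in> measurable N (F (real n))" by (rule measurable_into_filtration[OF filt _ b]) simp
  qed
  from measurable_compose[OF this prog[unfolded progressive_def, rule_format, of "real n"]]
  show "(\<lambda>x. X (min (a x) (real n)) (b x)) \<in> borel_measurable N" by simp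
next
  fix x
  obtain m :: nat where "a x \<le> real m" using real_arch_simple by blast
  then have "\<forall>\<^sub>F n in sequentially. X (min (a x) (real n)) (b x) = X (a x) (b x)"
    unfolding eventually_sequentially by (intro exI[of _ m]) (auto simp: min_def)
  then show "(\<lambda>n. X (min (a x) (real n)) (b x)) \<longlonglongrightarrow> X (a x) (b x)"
    by (rule tendsto_eventually)
qed

lemma rlim_tendsto:
  assumes "has_right_limits M W" "\<omega> \<in> space M" "0 \<le> t"
  shows "((\<lambda>s. W s \<omega>) \<longlongrightarrow> rlim W t \<omega>) (at_right t)"
proof -
  obtain l where l: "((\<lambda>s. W s \<omega>) \<longlongrightarrow> l) (at_right t)"
    using assms unfolding has_right_limits_def by blast
  then have "rlim W t \<omega> = l" unfolding rlim_def by (intro tendsto_Lim) auto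
  then show ?thesis using l by simp
qed

lemma filterlim_plus_inverse_Suc_at_right:
  "filterlim (\<lambda>n. t + 1 / real (Suc n)) (at_right t) sequentially"
proof (subst filterlim_at, intro conjI)
  show "\<forall>\<^sub>F n in sequentially. t + 1 / real (Suc n) \<in> {t<..} \<and> t + 1 / real (Suc n) \<noteq> t"
    by (intro always_eventually) auto
  have "(\<lambda>n. 1 / real (Suc n)) \<longlonglongrightarrow> 0"
    using LIMSEQ_inverse_real_of_nat by (simp add: inverse_eq_divide)
  then show "(\<lambda>n. t + 1 / real (Suc n)) \<longlonglongrightarrow> t"
    using tendsto_add[OF tendsto_const] by fastforce
qed

lemma measurable_rlim_comp:
  assumes filt: "std_filtration M F" and opt: "optional M F W" and rl: "has_right_limits M W"
    and a: "a \<in> borel_measurable N" and b: "b \<in> measurable N M"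
    and a_nonneg: "\<And>x. x \<in> space N \<Longrightarrow> 0 \<le> a x"
  shows "(\<lambda>x. rlim W (a x) (b x)) \<in> borel_measurable N"
proof (rule borel_measurable_LIMSEQ_real)
  fix n :: nat
  show "(\<lambda>x. W (a x + 1 / real (Suc n)) (b x)) \<in> borel_measurable N"
    by (rule measurable_optional_comp[OF filt opt _ b]) (use a a_nonneg in auto)
next
  fix x assume x: "x \<in> space N"
  from filterlim_compose[OF rlim_tendsto[OF rl measurable_space[OF b x] a_nonneg[OF x]]
      filterlim_plus_inverse_Suc_at_right]
  show "(\<lambda>n. W (a x + 1 / real (Suc n)) (b x)) \<longlonglongrightarrow> rlim W (a x) (b x)" by simp
qed

text \<open>Processes only matter at times \<open>t \<ge> 0\<close>; clamping negative times to \<open>0\<close> turns a process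
  into a function on \<open>\<Omega> \<times> \<real>\<close>, whose measurability w.r.t.\ \<open>M \<Otimes> lborel\<close> is what Fubini needs.\<close>

definition joint :: "(real \<Rightarrow> 'a \<Rightarrow> real) \<Rightarrow> 'a \<times> real \<Rightarrow> real" where
  "joint X = (\<lambda>(\<omega>, s). X (max s 0) \<omega>)"

lemma joint_measurable_progressive:
  "std_filtration M F \<Longrightarrow> progressive M F X \<Longrightarrow> joint X \<in> borel_measurable (M \<Otimes>\<^sub>M lborel)"
  unfolding joint_def case_prod_beta'
  by (rule measurable_progressive_comp[OF _ _ _ measurable_fst]) auto

lemma joint_measurable_optional:
  "std_filtration M F \<Longrightarrow> optional M F X \<Longrightarrow> joint X \<in> borel_measurable (M \<Otimes>\<^sub>M lborel)"
  unfolding joint_def case_prod_beta'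
  by (rule measurable_optional_comp[OF _ _ _ measurable_fst]) auto

lemma joint_eq: "0 \<le> s \<Longrightarrow> joint X (\<omega>, s) = X s \<omega>"
  by (simp add: joint_def max_absorb1)

lemma measurable_joint_section:
  assumes X: "joint X \<in> borel_measurable (M \<Otimes>\<^sub>M lborel)" and \<omega>: "\<omega> \<in> space M"
    and S: "S \<in> sets borel" "S \<subseteq> {0..}"
  shows "(\<lambda>r. ennreal (X r \<omega>) * indicator S r) \<in> borel_measurable lborel"
proof -
  have "(\<lambda>r. joint X (\<omega>, r)) \<in> borel_measurable lborel" by (rule measurable_Pair2[OF X \<omega>])
  then have "(\<lambda>r. ennreal (joint X (\<omega>, r)) * indicator S r) \<in> borel_measurable lborel"
    using S by measurable
  moreover have "ennreal (joint X (\<omega>, r)) * indicator S r = ennreal (X r \<omega>) * indicator S r" for r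
    using S(2) by (cases "r \<in> S") (auto simp: joint_eq)
  ultimately show ?thesis by simp
qed

lemma borel_measurable_nn_integral_interval:
  assumes X: "joint X \<in> borel_measurable (M \<Otimes>\<^sub>M lborel)"
    and [measurable]: "a \<in> borel_measurable M" "b \<in> borel_measurable M"
    and a_nonneg: "\<And>\<omega>. \<omega> \<in> space M \<Longrightarrow> 0 \<le> a \<omega>"
  shows "(\<lambda>\<omega>. \<integral>\<^sup>+ s\<in>{a \<omega>..b \<omega>}. ennreal (X s \<omega>) \<partial>lborel) \<in> borel_measurable M"
proof -
  have [measurable]: "(\<lambda>p. ennreal (joint X p)) \<in> borel_measurable (M \<Otimes>\<^sub>M lborel)"
    using X by measurable
  have "(\<lambda>p. ennreal (joint X p) * (if a (fst p) \<le> snd p \<and> snd p \<le> b (fst p) then 1 else 0))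
      \<in> borel_measurable (M \<Otimes>\<^sub>M lborel)"
    by measurable
  then have "(\<lambda>\<omega>. \<integral>\<^sup>+ s. ennreal (joint X (\<omega>, s)) * indicator {a \<omega>..b \<omega>} s \<partial>lborel)
      \<in> borel_measurable M"
    by (intro lborel.borel_measurable_nn_integral) (simp add: case_prod_beta' indicator_def)
  moreover have "(\<integral>\<^sup>+ s. ennreal (joint X (\<omega>, s)) * indicator {a \<omega>..b \<omega>} s \<partial>lborel)
      = (\<integral>\<^sup>+ s\<in>{a \<omega>..b \<omega>}. ennreal (X s \<omega>) \<partial>lborel)" if "\<omega> \<in> space M" for \<omega>
    using a_nonneg[OF that]
    by (intro nn_integral_cong) (auto simp: joint_eq split: split_indicator)
  ultimately show ?thesis by (subst measurable_cong) auto
qed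

lemma nn_integral_joint_Fubini:
  assumes M: "sigma_finite_measure M" and X: "joint X \<in> borel_measurable (M \<Otimes>\<^sub>M lborel)"
    and S: "S \<in> sets borel" "S \<subseteq> {0..}"
  shows "(\<integral>\<^sup>+ \<omega>. (\<integral>\<^sup>+ r\<in>S. ennreal (X r \<omega>) \<partial>lborel) \<partial>M)
    = (\<integral>\<^sup>+ r\<in>S. (\<integral>\<^sup>+ \<omega>. ennreal (X r \<omega>) \<partial>M) \<partial>lborel)"
proof -
  interpret sigma_finite_measure M by (fact M)
  interpret pair_sigma_finite M lborel ..
  define H where "H \<omega> r = ennreal (joint X (\<omega>, r)) * indicator S r" for \<omega> r
  have "case_prod H \<in> borel_measurable (M \<Otimes>\<^sub>M lborel)"
    unfolding H_def case_prod_beta' using X S by measurable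
  moreover have "ennreal (X r \<omega>) * indicator S r = H \<omega> r" for \<omega> r
    using S(2) by (cases "r \<in> S") (auto simp: H_def joint_eq)
  moreover have "(\<integral>\<^sup>+ \<omega>. H \<omega> r \<partial>M) = (\<integral>\<^sup>+ \<omega>. ennreal (X r \<omega>) \<partial>M) * indicator S r" for r
    using S(2) by (cases "r \<in> S") (auto simp: H_def joint_eq)
  ultimately show ?thesis using Fubini'[of H] by simp
qed

lemma AE_AE_lborel_of_AE:
  fixes P :: "real \<Rightarrow> 'a \<Rightarrow> bool"
  assumes M: "sigma_finite_measure M"
    and P: "Measurable.pred (M \<Otimes>\<^sub>M lborel) (\<lambda>(\<omega>, r). P (max r 0) \<omega>)"
    and AE_P: "\<And>t. 0 \<le> t \<Longrightarrow> AE \<omega> in M. P t \<omega>"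
  shows "AE \<omega> in M. AE r in lborel. 0 \<le> r \<longrightarrow> P r \<omega>"
proof -
  interpret sigma_finite_measure M by (fact M)
  interpret pair_sigma_finite M lborel ..
  have "{p \<in> space (M \<Otimes>\<^sub>M lborel). 0 \<le> snd p \<longrightarrow> P (snd p) (fst p)}
      = {p \<in> space (M \<Otimes>\<^sub>M lborel). 0 \<le> snd p \<longrightarrow> P (max (snd p) 0) (fst p)}"
    by (auto simp: max_absorb1)
  also have "\<dots> \<in> sets (M \<Otimes>\<^sub>M lborel)"
    using P unfolding case_prod_beta' by measurable
  finally have "(AE \<omega> in M. AE r in lborel. 0 \<le> r \<longrightarrow> P r \<omega>)
      \<longleftrightarrow> (AE r in lborel. AE \<omega> in M. 0 \<le> r \<longrightarrow> P r \<omega>)"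
    by (rule AE_commute)
  moreover have "AE r in lborel. AE \<omega> in M. 0 \<le> r \<longrightarrow> P r \<omega>"
  proof (rule AE_I2)
    fix r :: real
    show "AE \<omega> in M. 0 \<le> r \<longrightarrow> P r \<omega>" by (cases "0 \<le> r") (simp_all add: AE_P)
  qed
  ultimately show ?thesis by simp
qed

section \<open>A backward Gronwall inequality\<close>

lemma backward_gronwall_step:
  fixes f :: "real \<Rightarrow> ennreal" and \<beta> :: "real \<Rightarrow> real"
  assumes \<beta>: "\<beta> \<in> borel_measurable borel"
    and f_bounded: "\<And>r. 0 \<le> r \<Longrightarrow> f r \<le> ennreal C"
    and f_le: "\<And>t. 0 \<le> t \<Longrightarrow> f t \<le> (\<integral>\<^sup>+ r\<in>{t..}. ennreal (\<beta> r) * f r \<partial>lborel)"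
    and v: "0 \<le> v" and Z: "Z \<in> sets borel" and f_outside: "\<And>r. v \<le> r \<Longrightarrow> r \<notin> Z \<Longrightarrow> f r = 0"
    and small: "(\<integral>\<^sup>+ r\<in>Z. ennreal (\<beta> r) \<partial>lborel) \<le> ennreal (1/2)"
  shows "v \<le> t \<Longrightarrow> f t = 0"
proof -
  define S where "S = (SUP r\<in>{v..}. f r)"
  have f_le_S: "v \<le> r \<Longrightarrow> f r \<le> S" for r unfolding S_def by (rule SUP_upper) simp
  have "f t \<le> S * ennreal (1/2)" if t: "v \<le> t" for t
  proof -
    have "f t \<le> (\<integral>\<^sup>+ r\<in>{t..}. ennreal (\<beta> r) * f r \<partial>lborel)" using f_le v t by simp
    also have "\<dots> \<le> (\<integral>\<^sup>+ r. S * (ennreal (\<beta> r) * indicator Z r) \<partial>lborel)"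
    proof (intro nn_integral_mono)
      fix r
      show "ennreal (\<beta> r) * f r * indicator {t..} r \<le> S * (ennreal (\<beta> r) * indicator Z r)"
        using f_le_S[of r] f_outside[of r] t
        by (cases "t \<le> r"; cases "r \<in> Z") (auto simp: mult.commute intro: mult_right_mono)
    qed
    also have "\<dots> = S * (\<integral>\<^sup>+ r\<in>Z. ennreal (\<beta> r) \<partial>lborel)"
      by (rule nn_integral_cmult) (use Z \<beta> in measurable)
    also have "\<dots> \<le> S * ennreal (1/2)" using small by (rule mult_left_mono) simp
    finally show ?thesis .
  qed
  then have "S \<le> S * ennreal (1/2)" unfolding S_def by (intro SUP_least) (auto simp: S_def)
  moreover obtain s where s: "S = ennreal s" "0 \<le> s"
  proof -
    have "S \<le> ennreal C" unfolding S_def using f_bounded v by (intro SUP_least) simp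
    then show ?thesis using that by (cases S rule: ennreal_cases) (auto simp: top_unique)
  qed
  moreover have "ennreal (s * (1/2)) = ennreal s * ennreal (1/2)"
    by (rule ennreal_mult) (use s(2) in simp_all)
  ultimately have "ennreal s \<le> ennreal (s * (1/2))" using s(1) by metis
  then have "S = 0" using s by (simp add: ennreal_le_iff)
  then show "v \<le> t \<Longrightarrow> f t = 0" using f_le_S by (metis le_zero_eq)
qed

lemma nn_integral_tail_less:
  fixes \<beta> :: "real \<Rightarrow> real" and e :: ennreal
  assumes \<beta>: "\<beta> \<in> borel_measurable borel"
    and finite: "(\<integral>\<^sup>+ r\<in>{0..}. ennreal (\<beta> r) \<partial>lborel) < \<infinity>" and e: "0 < e"
  shows "\<exists>t\<ge>0. (\<integral>\<^sup>+ r\<in>{t..}. ennreal (\<beta> r) \<partial>lborel) < e"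
proof -
  define g where "g n r = ennreal (\<beta> r) * indicator {real n..} r" for n r
  have "decseq g"
    unfolding g_def by (intro decseq_SucI le_funI) (auto split: split_indicator)
  moreover have "g n \<in> borel_measurable lborel" for n unfolding g_def using \<beta> by measurable
  moreover have "(\<integral>\<^sup>+ r. g 0 r \<partial>lborel) < \<infinity>" unfolding g_def using finite by simp
  ultimately have "(\<integral>\<^sup>+ r. (INF n. g n r) \<partial>lborel) = (INF n. \<integral>\<^sup>+ r. g n r \<partial>lborel)"
    by (rule nn_integral_monotone_convergence_INF_decseq)
  moreover have "(INF n. g n r) = 0" for r
  proof -
    obtain n :: nat where "r < real n" using reals_Archimedean2 by blast
    then have "g n r = 0" unfolding g_def by simp
    then show ?thesis by (metis INF_lower UNIV_I le_zero_eq)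
  qed
  ultimately have "(INF n. \<integral>\<^sup>+ r. g n r \<partial>lborel) < e" using e by simp
  then obtain n where "(\<integral>\<^sup>+ r. g n r \<partial>lborel) < e" by (auto simp: INF_less_iff)
  then show ?thesis unfolding g_def by (intro exI[of _ "real n"]) simp
qed

lemma backward_gronwall_propagate:
  fixes f :: "real \<Rightarrow> ennreal" and \<beta> :: "real \<Rightarrow> real"
  assumes \<beta>: "\<beta> \<in> borel_measurable borel" and \<beta>_le: "\<And>r. 0 \<le> r \<Longrightarrow> \<beta> r \<le> b"
    and f_bounded: "\<And>r. 0 \<le> r \<Longrightarrow> f r \<le> ennreal C"
    and f_le: "\<And>t. 0 \<le> t \<Longrightarrow> f t \<le> (\<integral>\<^sup>+ r\<in>{t..}. ennreal (\<beta> r) * f r \<partial>lborel)"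
    and vanish: "\<And>r. t0 \<le> r \<Longrightarrow> f r = 0"
  shows "0 \<le> t \<Longrightarrow> f t = 0"
proof -
  define B where "B = max b 1"
  define \<delta> where "\<delta> = 1 / (2 * B)"
  have B: "0 < B" "\<And>r. 0 \<le> r \<Longrightarrow> \<beta> r \<le> B" using \<beta>_le by (force simp: B_def)+
  have \<delta>: "0 < \<delta>" "B * \<delta> = 1/2" using B(1) by (simp_all add: \<delta>_def)
  \<comment> \<open>on an interval of length \<open>\<delta>\<close> the kernel has mass at most \<open>1/2\<close>\<close>
  have propagated: "\<forall>r\<ge>max 0 (t0 - real n * \<delta>). f r = 0" for n
  proof (induction n)
    case 0
    show ?case using vanish by simp
  next
    case (Suc n)
    define v where "v = max 0 (t0 - real (Suc n) * \<delta>)"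
    define u where "u = max 0 (t0 - real n * \<delta>)"
    have vu: "0 \<le> v" "v \<le> u" "u - v \<le> \<delta>"
      unfolding u_def v_def using \<delta> by (auto simp: algebra_simps)
    have "(\<integral>\<^sup>+ r\<in>{v..u}. ennreal (\<beta> r) \<partial>lborel) \<le> (\<integral>\<^sup>+ r\<in>{v..u}. ennreal B \<partial>lborel)"
      using B(2) vu by (intro nn_integral_mono) (auto split: split_indicator intro!: ennreal_leI)
    also have "\<dots> = ennreal (B * (u - v))"
      using vu B by (simp add: nn_integral_cmult_indicator ennreal_mult)
    also have "\<dots> \<le> ennreal (1/2)"
      using vu B \<delta> by (intro ennreal_leI) (metis mult_left_mono less_imp_le)
    finally have small: "(\<integral>\<^sup>+ r\<in>{v..u}. ennreal (\<beta> r) \<partial>lborel) \<le> ennreal (1/2)" .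
    have outside: "f r = 0" if "v \<le> r" "r \<notin> {v..u}" for r
    proof -
      have "max 0 (t0 - real n * \<delta>) \<le> r" using that unfolding u_def by auto
      then show ?thesis using Suc.IH by blast
    qed
    have "f r = 0" if "v \<le> r" for r
      by (rule backward_gronwall_step[OF \<beta> f_bounded f_le vu(1) _ outside small that]) measurable
    then show ?case unfolding v_def by blast
  qed
  assume "0 \<le> t"
  moreover obtain n :: nat where "t0 / \<delta> \<le> real n" using real_arch_simple by blast
  then have "t0 \<le> real n * \<delta>" using \<delta> by (simp add: field_simps)
  ultimately show "f t = 0" using propagated[of n] by simp
qed

lemma backward_gronwall:
  fixes f :: "real \<Rightarrow> ennreal" and \<beta> :: "real \<Rightarrow> real"
  assumes \<beta>: "\<beta> \<in> borel_measurable borel" and \<beta>_le: "\<And>r. 0 \<le> r \<Longrightarrow> \<beta> r \<le> b"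
    and \<beta>_finite: "(\<integral>\<^sup>+ r\<in>{0..}. ennreal (\<beta> r) \<partial>lborel) < \<infinity>"
    and f_bounded: "\<And>r. 0 \<le> r \<Longrightarrow> f r \<le> ennreal C"
    and f_le: "\<And>t. 0 \<le> t \<Longrightarrow> f t \<le> (\<integral>\<^sup>+ r\<in>{t..}. ennreal (\<beta> r) * f r \<partial>lborel)"
  shows "0 \<le> t \<Longrightarrow> f t = 0"
proof -
  have "0 < ennreal (1/2)" by (subst ennreal_less_zero_iff) simp
  then obtain t0 where t0: "0 \<le> t0" "(\<integral>\<^sup>+ r\<in>{t0..}. ennreal (\<beta> r) \<partial>lborel) < ennreal (1/2)"
    using nn_integral_tail_less[OF \<beta> \<beta>_finite] by blast
  have "f r = 0" if "t0 \<le> r" for r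
    by (rule backward_gronwall_step[OF \<beta> f_bounded f_le t0(1) _ _ less_imp_le[OF t0(2)] that]) simp_all
  then show "0 \<le> t \<Longrightarrow> f t = 0" using backward_gronwall_propagate[OF \<beta> \<beta>_le f_bounded f_le] by blast
qed

lemma subsolutionD:
  assumes "subsolution M F g U W"
  shows subsolution_optional: "optional M F W"
    and subsolution_right_limits: "has_right_limits M W"
    and subsolution_nonneg: "0 \<le> t \<Longrightarrow> \<omega> \<in> space M \<Longrightarrow> 0 \<le> W t \<omega>"
    and subsolution_Limsup: "Limsup at_top (\<lambda>t::real. \<integral>\<^sup>+ \<omega>. ennreal (rlim W t \<omega>) \<partial>M) \<le> 0"
    and subsolution_le: "bounded_stopping_time M F \<sigma> \<Longrightarrow> bounded_stopping_time M F \<tau>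
      \<Longrightarrow> (\<And>\<omega>. \<omega> \<in> space M \<Longrightarrow> \<sigma> \<omega> \<le> \<tau> \<omega>)
      \<Longrightarrow> AE \<omega> in M. ennreal (W (\<sigma> \<omega>) \<omega>) \<le> nn_cond_exp M (stopped_sigma M F \<sigma>)
            (\<lambda>\<omega>. ennreal (rlim W (\<tau> \<omega>) \<omega>) +
              (\<integral>\<^sup>+ s\<in>{\<sigma> \<omega>..\<tau> \<omega>}. ennreal (g s \<omega> (U s \<omega>) (W s \<omega>)) \<partial>lborel)) \<omega>"
  using assms unfolding subsolution_def by blast+

lemma supersolutionD:
  assumes "supersolution M F g U W"
  shows supersolution_optional: "optional M F W"
    and supersolution_right_limits: "has_right_limits M W"
    and supersolution_nonneg: "0 \<le> t \<Longrightarrow> \<omega> \<in> space M \<Longrightarrow> 0 \<le> W t \<omega>"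
    and supersolution_ge: "bounded_stopping_time M F \<sigma> \<Longrightarrow> bounded_stopping_time M F \<tau>
      \<Longrightarrow> (\<And>\<omega>. \<omega> \<in> space M \<Longrightarrow> \<sigma> \<omega> \<le> \<tau> \<omega>)
      \<Longrightarrow> AE \<omega> in M. nn_cond_exp M (stopped_sigma M F \<sigma>)
            (\<lambda>\<omega>. ennreal (rlim W (\<tau> \<omega>) \<omega>) +
              (\<integral>\<^sup>+ s\<in>{\<sigma> \<omega>..\<tau> \<omega>}. ennreal (g s \<omega> (U s \<omega>) (W s \<omega>)) \<partial>lborel)) \<omega>
          \<le> ennreal (W (\<sigma> \<omega>) \<omega>)"
  using assms unfolding supersolution_def by blast+

lemma supersolution_ge_cond_exp:
  assumes filt: "std_filtration M F" and super: "supersolution M F g U W"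
    and g_meas: "joint (\<lambda>r \<omega>. g r \<omega> (U r \<omega>) (W r \<omega>)) \<in> borel_measurable (M \<Otimes>\<^sub>M lborel)"
    and Y_meas: "joint Y \<in> borel_measurable (M \<Otimes>\<^sub>M lborel)"
    and g_ge: "\<And>r \<omega>. 0 \<le> r \<Longrightarrow> \<omega> \<in> space M \<Longrightarrow> \<epsilon> * Y r \<omega> \<le> g r \<omega> (U r \<omega>) (W r \<omega>)"
    and \<epsilon>: "0 \<le> \<epsilon>" and s: "0 \<le> s" and T: "s \<le> T"
  shows "AE \<omega> in M. ennreal \<epsilon> * nn_cond_exp M (stopped_sigma M F (\<lambda>_. s))
    (\<lambda>\<omega>. \<integral>\<^sup>+ r\<in>{s..T}. ennreal (Y r \<omega>) \<partial>lborel) \<omega> \<le> ennreal (W s \<omega>)"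
proof -
  let ?G = "stopped_sigma M F (\<lambda>_. s)"
  interpret sigma_finite_subalgebra M ?G
    by (rule sigma_finite_subalgebra_stopped_sigma[OF std_filtration_prob_space[OF filt]])
  define Z where "Z \<omega> = (\<integral>\<^sup>+ r\<in>{s..T}. ennreal (Y r \<omega>) \<partial>lborel)" for \<omega>
  define X where "X \<omega> = ennreal (rlim W T \<omega>)
    + (\<integral>\<^sup>+ r\<in>{s..T}. ennreal (g r \<omega> (U r \<omega>) (W r \<omega>)) \<partial>lborel)" for \<omega>
  have [measurable]: "Z \<in> borel_measurable M"
    unfolding Z_def[abs_def] by (rule borel_measurable_nn_integral_interval[OF Y_meas]) (use s in auto)
  have [measurable]: "(\<lambda>\<omega>. rlim W T \<omega>) \<in> borel_measurable M"
    using measurable_rlim_comp[OF filt supersolution_optional[OF super]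
        supersolution_right_limits[OF super] _ measurable_ident_sets[OF refl], of "\<lambda>_. T"] s T
    by simp
  have [measurable]: "(\<lambda>\<omega>. \<integral>\<^sup>+ r\<in>{s..T}. ennreal (g r \<omega> (U r \<omega>) (W r \<omega>)) \<partial>lborel) \<in> borel_measurable M"
    by (rule borel_measurable_nn_integral_interval[OF g_meas]) (use s in auto)
  have "AE \<omega> in M. ennreal \<epsilon> * nn_cond_exp M ?G Z \<omega> = nn_cond_exp M ?G (\<lambda>\<omega>. ennreal \<epsilon> * Z \<omega>) \<omega>"
    by (rule nn_cond_exp_prod) simp_all
  moreover have "AE \<omega> in M. nn_cond_exp M ?G (\<lambda>\<omega>. ennreal \<epsilon> * Z \<omega>) \<omega> \<le> nn_cond_exp M ?G X \<omega>"
  proof (rule nn_cond_exp_mono)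
    show "AE \<omega> in M. ennreal \<epsilon> * Z \<omega> \<le> X \<omega>"
    proof (rule AE_I2)
      fix \<omega> assume \<omega>: "\<omega> \<in> space M"
      have "ennreal \<epsilon> * Z \<omega> = (\<integral>\<^sup>+ r\<in>{s..T}. ennreal (\<epsilon> * Y r \<omega>) \<partial>lborel)"
        unfolding Z_def using \<epsilon> measurable_joint_section[OF Y_meas \<omega>, of "{s..T}"] s
        by (simp add: ennreal_mult' nn_integral_cmult[symmetric] mult.assoc)
      also have "\<dots> \<le> (\<integral>\<^sup>+ r\<in>{s..T}. ennreal (g r \<omega> (U r \<omega>) (W r \<omega>)) \<partial>lborel)"
        using g_ge[OF _ \<omega>] s by (intro nn_integral_mono) (auto split: split_indicator intro!: ennreal_leI)
      also have "\<dots> \<le> X \<omega>" unfolding X_def by simp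
      finally show "ennreal \<epsilon> * Z \<omega> \<le> X \<omega>" .
    qed
  qed (unfold X_def, measurable)
  moreover have "AE \<omega> in M. nn_cond_exp M ?G X \<omega> \<le> ennreal (W s \<omega>)"
    using supersolution_ge[OF super bounded_stopping_time_const[OF filt s]
        bounded_stopping_time_const[OF filt, of T]] s T
    unfolding X_def[abs_def] by simp
  ultimately show ?thesis unfolding Z_def[abs_def] by eventually_elim simp
qed

lemma supersolution_ge_J:
  assumes filt: "std_filtration M F" and super: "supersolution M F g U W"
    and g_meas: "joint (\<lambda>r \<omega>. g r \<omega> (U r \<omega>) (W r \<omega>)) \<in> borel_measurable (M \<Otimes>\<^sub>M lborel)"
    and Y_meas: "joint Y \<in> borel_measurable (M \<Otimes>\<^sub>M lborel)"
    and g_ge: "\<And>r \<omega>. 0 \<le> r \<Longrightarrow> \<omega> \<in> space M \<Longrightarrow> \<epsilon> * Y r \<omega> \<le> g r \<omega> (U r \<omega>) (W r \<omega>)"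
    and \<epsilon>: "0 \<le> \<epsilon>" and s: "0 \<le> s"
  shows "AE \<omega> in M. ennreal \<epsilon> * Jproc M F Y s \<omega> \<le> ennreal (W s \<omega>)"
proof -
  let ?G = "stopped_sigma M F (\<lambda>_. s)"
  interpret sigma_finite_subalgebra M ?G
    by (rule sigma_finite_subalgebra_stopped_sigma[OF std_filtration_prob_space[OF filt]])
  define Z where "Z n \<omega> = (\<integral>\<^sup>+ r\<in>{s..s + real n}. ennreal (Y r \<omega>) \<partial>lborel)" for n \<omega>
  have Z_meas[measurable]: "Z n \<in> borel_measurable M" for n
    unfolding Z_def by (rule borel_measurable_nn_integral_interval[OF Y_meas]) (use s in auto)
  have bound: "AE \<omega> in M. \<forall>n. ennreal \<epsilon> * nn_cond_exp M ?G (Z n) \<omega> \<le> ennreal (W s \<omega>)"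
    unfolding AE_all_countable Z_def[abs_def]
  proof
    fix n :: nat
    show "AE \<omega> in M. ennreal \<epsilon> * nn_cond_exp M ?G (\<lambda>\<omega>. \<integral>\<^sup>+ r\<in>{s..s + real n}. ennreal (Y r \<omega>) \<partial>lborel) \<omega>
        \<le> ennreal (W s \<omega>)"
      by (rule supersolution_ge_cond_exp[OF filt super g_meas Y_meas _ \<epsilon> s]) (use g_ge in auto)
  qed
  have SUP_cond_exp: "AE \<omega> in M. (SUP n. nn_cond_exp M ?G (Z n) \<omega>) = nn_cond_exp M ?G (\<lambda>\<omega>. SUP n. Z n \<omega>) \<omega>"
    by (rule nn_cond_exp_monotone_convergence)
      (simp_all add: Z_def nn_integral_mono split: split_indicator)
  have SUP_Z: "(SUP n. Z n \<omega>) = (\<integral>\<^sup>+ r\<in>{s..}. ennreal (Y r \<omega>) \<partial>lborel)" if "\<omega> \<in> space M" for \<omega>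
    unfolding Z_def
    by (rule nn_integral_atLeast_SUP, rule measurable_joint_section[OF Y_meas that]) (use s in auto)
  have SUP_meas: "(\<lambda>\<omega>. SUP n. Z n \<omega>) \<in> borel_measurable M" by measurable
  then have "(\<lambda>\<omega>. \<integral>\<^sup>+ r\<in>{s..}. ennreal (Y r \<omega>) \<partial>lborel) \<in> borel_measurable M"
    by (subst measurable_cong[OF SUP_Z[symmetric]])
  from nn_cond_exp_cong[OF AE_I2[OF SUP_Z] SUP_meas this]
  have cond_exp_J: "AE \<omega> in M. nn_cond_exp M ?G (\<lambda>\<omega>. SUP n. Z n \<omega>) \<omega> = Jproc M F Y s \<omega>"
    unfolding Jproc_def nn_cond_exp_stopped_sigma_const[OF filt s] by simp
  from bound SUP_cond_exp cond_exp_J show ?thesis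
  proof eventually_elim
    case (elim \<omega>)
    then have "ennreal \<epsilon> * Jproc M F Y s \<omega> = ennreal \<epsilon> * (SUP n. nn_cond_exp M ?G (Z n) \<omega>)"
      by simp
    also have "\<dots> = (SUP n. ennreal \<epsilon> * nn_cond_exp M ?G (Z n) \<omega>)"
      by (rule SUP_mult_left_ennreal)
    also have "\<dots> \<le> ennreal (W s \<omega>)" using elim(1) by (intro SUP_least) simp
    finally show ?case .
  qed
qed

lemma supersolution_ge_SO:
  assumes filt: "std_filtration M F" and super: "supersolution M F g U W"
    and g_meas: "joint (\<lambda>r \<omega>. g r \<omega> (U r \<omega>) (W r \<omega>)) \<in> borel_measurable (M \<Otimes>\<^sub>M lborel)"
    and Y: "SO M F Y" and \<epsilon>: "0 < \<epsilon>"
    and g_ge: "\<And>r \<omega>. 0 \<le> r \<Longrightarrow> \<omega> \<in> space M \<Longrightarrow> \<epsilon> * Y r \<omega> \<le> g r \<omega> (U r \<omega>) (W r \<omega>)"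
  shows "\<exists>c>0. \<forall>s\<ge>0. AE \<omega> in M. c * Y s \<omega> \<le> W s \<omega>"
proof -
  obtain k K :: real where K: "0 < k" "k \<le> K" and bounds: "\<forall>t\<ge>0. AE \<omega> in M.
      ennreal k * Jproc M F Y t \<omega> \<le> ennreal (Y t \<omega>) \<and> ennreal (Y t \<omega>) \<le> ennreal K * Jproc M F Y t \<omega>"
    using Y unfolding SO_def by blast
  have Y_le: "AE \<omega> in M. ennreal (Y t \<omega>) \<le> ennreal K * Jproc M F Y t \<omega>" if "0 \<le> t" for t
    using bounds[rule_format, OF that] by eventually_elim simp
  have Y_meas: "joint Y \<in> borel_measurable (M \<Otimes>\<^sub>M lborel)"
    using joint_measurable_progressive[OF filt] Y unfolding SO_def progressive_pos_def by blast
  show ?thesis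
  proof (intro exI[of _ "\<epsilon> / K"] conjI allI impI)
    show "0 < \<epsilon> / K" using \<epsilon> K by simp
    fix s :: real assume s: "0 \<le> s"
    have J_le: "AE \<omega> in M. ennreal \<epsilon> * Jproc M F Y s \<omega> \<le> ennreal (W s \<omega>)"
      by (rule supersolution_ge_J[OF filt super g_meas Y_meas _ _ s]) (use g_ge \<epsilon> in auto)
    from Y_le[OF s] J_le AE_space show "AE \<omega> in M. \<epsilon> / K * Y s \<omega> \<le> W s \<omega>"
    proof eventually_elim
      case (elim \<omega>)
      have "ennreal (\<epsilon> * Y s \<omega>) \<le> ennreal \<epsilon> * (ennreal K * Jproc M F Y s \<omega>)"
        using elim(1) \<epsilon> by (simp add: ennreal_mult' mult_left_mono)
      also have "\<dots> = ennreal K * (ennreal \<epsilon> * Jproc M F Y s \<omega>)" by (simp add: ac_simps)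
      also have "\<dots> \<le> ennreal K * ennreal (W s \<omega>)" using elim(2) by (rule mult_left_mono) simp
      also have "\<dots> = ennreal (K * W s \<omega>)" using K by (simp add: ennreal_mult')
      finally have "\<epsilon> * Y s \<omega> \<le> K * W s \<omega>"
        using K supersolution_nonneg[OF super s elim(3)] by (simp add: ennreal_le_iff)
      then show ?case using K by (simp add: field_simps)
    qed
  qed
qed

section \<open>Comparison of sub- and supersolutions\<close>

locale sub_super_pair =
  fixes M :: "'a measure" and F :: "real \<Rightarrow> 'a measure" and g1 g2 :: "'a aggregator"
    and U1 U2 W1 W2 :: "real \<Rightarrow> 'a \<Rightarrow> real" and \<beta> :: "real \<Rightarrow> real"
  assumes filt: "std_filtration M F"
    and sub: "subsolution M F g1 U1 W1" and super: "supersolution M F g2 U2 W2"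
    and g1_meas: "joint (\<lambda>r \<omega>. g1 r \<omega> (U1 r \<omega>) (W1 r \<omega>)) \<in> borel_measurable (M \<Otimes>\<^sub>M lborel)"
    and g2_meas: "joint (\<lambda>r \<omega>. g2 r \<omega> (U2 r \<omega>) (W2 r \<omega>)) \<in> borel_measurable (M \<Otimes>\<^sub>M lborel)"
    and \<beta>_meas: "\<beta> \<in> borel_measurable borel" and \<beta>_nonneg: "\<And>r. 0 \<le> \<beta> r"
    and g1_le: "AE \<omega> in M. AE r in lborel. 0 \<le> r \<longrightarrow>
      g1 r \<omega> (U1 r \<omega>) (W1 r \<omega>) \<le> g2 r \<omega> (U2 r \<omega>) (W2 r \<omega>) + \<beta> r * max 0 (W1 r \<omega> - W2 r \<omega>)"
begin

sublocale prob_space M by (rule std_filtration_prob_space[OF filt])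

definition gap :: "real \<Rightarrow> 'a \<Rightarrow> real" where
  "gap r \<omega> = max 0 (W1 r \<omega> - W2 r \<omega>)"

definition expected_gap :: "real \<Rightarrow> ennreal" where
  "expected_gap r = (\<integral>\<^sup>+ \<omega>. ennreal (gap r \<omega>) \<partial>M)"

lemma measurable_processes_at:
  assumes "a \<in> borel_measurable M" "\<And>\<omega>. \<omega> \<in> space M \<Longrightarrow> 0 \<le> a \<omega>"
  shows measurable_rlim_W1_at: "(\<lambda>\<omega>. rlim W1 (a \<omega>) \<omega>) \<in> borel_measurable M"
    and measurable_rlim_W2_at: "(\<lambda>\<omega>. rlim W2 (a \<omega>) \<omega>) \<in> borel_measurable M"
    and measurable_gap_at: "(\<lambda>\<omega>. gap (a \<omega>) \<omega>) \<in> borel_measurable M"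
proof -
  note id = measurable_ident_sets[OF refl]
  show "(\<lambda>\<omega>. rlim W1 (a \<omega>) \<omega>) \<in> borel_measurable M"
    using measurable_rlim_comp[OF filt subsolution_optional[OF sub]
        subsolution_right_limits[OF sub] assms(1) id assms(2)] by simp
  show "(\<lambda>\<omega>. rlim W2 (a \<omega>) \<omega>) \<in> borel_measurable M"
    using measurable_rlim_comp[OF filt supersolution_optional[OF super]
        supersolution_right_limits[OF super] assms(1) id assms(2)] by simp
  have "(\<lambda>\<omega>. W1 (a \<omega>) \<omega>) \<in> borel_measurable M" "(\<lambda>\<omega>. W2 (a \<omega>) \<omega>) \<in> borel_measurable M"
    using measurable_optional_comp[OF filt subsolution_optional[OF sub] assms(1) id assms(2)]
      measurable_optional_comp[OF filt supersolution_optional[OF super] assms(1) id assms(2)]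
    by simp_all
  then show "(\<lambda>\<omega>. gap (a \<omega>) \<omega>) \<in> borel_measurable M" unfolding gap_def by measurable
qed

lemma joint_measurable_weighted_gap:
  "joint (\<lambda>r \<omega>. \<beta> r * gap r \<omega>) \<in> borel_measurable (M \<Otimes>\<^sub>M lborel)"
proof -
  have [measurable]: "\<beta> \<in> borel_measurable borel"
    "joint W1 \<in> borel_measurable (M \<Otimes>\<^sub>M lborel)" "joint W2 \<in> borel_measurable (M \<Otimes>\<^sub>M lborel)"
    using \<beta>_meas joint_measurable_optional[OF filt] subsolution_optional[OF sub]
      supersolution_optional[OF super] by blast+
  have "joint (\<lambda>r \<omega>. \<beta> r * gap r \<omega>) = (\<lambda>p. \<beta> (max (snd p) 0) * max 0 (joint W1 p - joint W2 p))"
    by (auto simp: joint_def gap_def)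
  then show ?thesis by simp
qed

lemma nn_integral_g1_le:
  "AE \<omega> in M. \<forall>a b. 0 \<le> a \<longrightarrow>
     (\<integral>\<^sup>+ r\<in>{a..b}. ennreal (g1 r \<omega> (U1 r \<omega>) (W1 r \<omega>)) \<partial>lborel)
     \<le> (\<integral>\<^sup>+ r\<in>{a..b}. ennreal (g2 r \<omega> (U2 r \<omega>) (W2 r \<omega>)) \<partial>lborel)
       + (\<integral>\<^sup>+ r\<in>{a..b}. ennreal (\<beta> r * gap r \<omega>) \<partial>lborel)"
  using g1_le AE_space
proof eventually_elim
  case (elim \<omega>)
  show ?case
  proof (intro allI impI)
    fix a b :: real assume a: "0 \<le> a"
    have "(\<integral>\<^sup>+ r\<in>{a..b}. ennreal (g1 r \<omega> (U1 r \<omega>) (W1 r \<omega>)) \<partial>lborel)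
      \<le> (\<integral>\<^sup>+ r. ennreal (g2 r \<omega> (U2 r \<omega>) (W2 r \<omega>)) * indicator {a..b} r
            + ennreal (\<beta> r * gap r \<omega>) * indicator {a..b} r \<partial>lborel)"
      using elim(1)
    proof (intro nn_integral_mono_AE, eventually_elim)
      case (elim r)
      have "ennreal (g1 r \<omega> (U1 r \<omega>) (W1 r \<omega>)) \<le> ennreal (g2 r \<omega> (U2 r \<omega>) (W2 r \<omega>) + \<beta> r * gap r \<omega>)"
        if "a \<le> r" using elim a that unfolding gap_def by (intro ennreal_leI) simp
      also have "\<dots> \<le> ennreal (g2 r \<omega> (U2 r \<omega>) (W2 r \<omega>)) + ennreal (\<beta> r * gap r \<omega>)"
        using \<beta>_nonneg by (intro ennreal_add_le) (simp add: gap_def)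
      finally show ?case by (auto split: split_indicator)
    qed
    also have "\<dots> = (\<integral>\<^sup>+ r\<in>{a..b}. ennreal (g2 r \<omega> (U2 r \<omega>) (W2 r \<omega>)) \<partial>lborel)
       + (\<integral>\<^sup>+ r\<in>{a..b}. ennreal (\<beta> r * gap r \<omega>) \<partial>lborel)"
      using a by (intro nn_integral_add measurable_joint_section[OF g2_meas elim(2)]
          measurable_joint_section[OF joint_measurable_weighted_gap elim(2)]) auto
    finally show "(\<integral>\<^sup>+ r\<in>{a..b}. ennreal (g1 r \<omega> (U1 r \<omega>) (W1 r \<omega>)) \<partial>lborel)
     \<le> (\<integral>\<^sup>+ r\<in>{a..b}. ennreal (g2 r \<omega> (U2 r \<omega>) (W2 r \<omega>)) \<partial>lborel)
       + (\<integral>\<^sup>+ r\<in>{a..b}. ennreal (\<beta> r * gap r \<omega>) \<partial>lborel)" .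
  qed
qed

lemma gap_stopped_le_cond_exp:
  assumes \<sigma>: "bounded_stopping_time M F \<sigma>" and T: "0 \<le> T" and \<sigma>_le: "\<And>\<omega>. \<omega> \<in> space M \<Longrightarrow> \<sigma> \<omega> \<le> T"
  shows "AE \<omega> in M. ennreal (gap (\<sigma> \<omega>) \<omega>) \<le> nn_cond_exp M (stopped_sigma M F \<sigma>)
    (\<lambda>\<omega>. ennreal (rlim W1 T \<omega>) + (\<integral>\<^sup>+ r\<in>{\<sigma> \<omega>..T}. ennreal (\<beta> r * gap r \<omega>) \<partial>lborel)) \<omega>"
proof -
  have \<sigma>_stop: "stopping_time_on M F \<sigma>" using \<sigma> unfolding bounded_stopping_time_def by blast
  have [measurable]: "\<sigma> \<in> borel_measurable M" by (rule borel_measurable_stopping_time_on[OF filt \<sigma>_stop])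
  note \<sigma>_nonneg = stopping_time_on_nonneg[OF \<sigma>_stop]
  let ?G = "stopped_sigma M F \<sigma>"
  interpret G: sigma_finite_subalgebra M ?G
    by (rule sigma_finite_subalgebra_stopped_sigma) (rule prob_space_axioms)
  define R1 where "R1 \<omega> = ennreal (rlim W1 T \<omega>)" for \<omega>
  define R2 where "R2 \<omega> = ennreal (rlim W2 T \<omega>)" for \<omega>
  define I1 where "I1 \<omega> = (\<integral>\<^sup>+ r\<in>{\<sigma> \<omega>..T}. ennreal (g1 r \<omega> (U1 r \<omega>) (W1 r \<omega>)) \<partial>lborel)" for \<omega>
  define I2 where "I2 \<omega> = (\<integral>\<^sup>+ r\<in>{\<sigma> \<omega>..T}. ennreal (g2 r \<omega> (U2 r \<omega>) (W2 r \<omega>)) \<partial>lborel)" for \<omega>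
  define IB where "IB \<omega> = (\<integral>\<^sup>+ r\<in>{\<sigma> \<omega>..T}. ennreal (\<beta> r * gap r \<omega>) \<partial>lborel)" for \<omega>
  have [measurable]: "R1 \<in> borel_measurable M" "R2 \<in> borel_measurable M"
    unfolding R1_def[abs_def] R2_def[abs_def]
    using measurable_rlim_W1_at[of "\<lambda>_. T"] measurable_rlim_W2_at[of "\<lambda>_. T"] T by simp_all
  have [measurable]: "I1 \<in> borel_measurable M" "I2 \<in> borel_measurable M" "IB \<in> borel_measurable M"
    unfolding I1_def[abs_def] I2_def[abs_def] IB_def[abs_def]
    by (rule borel_measurable_nn_integral_interval[OF _ _ _ \<sigma>_nonneg],
        simp_all add: g1_meas g2_meas joint_measurable_weighted_gap)+
  have sub_T: "AE \<omega> in M. ennreal (W1 (\<sigma> \<omega>) \<omega>) \<le> nn_cond_exp M ?G (\<lambda>\<omega>. R1 \<omega> + I1 \<omega>) \<omega>"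
    using subsolution_le[OF sub \<sigma> bounded_stopping_time_const[OF filt T] \<sigma>_le]
    unfolding R1_def I1_def by simp
  have super_T: "AE \<omega> in M. nn_cond_exp M ?G (\<lambda>\<omega>. R2 \<omega> + I2 \<omega>) \<omega> \<le> ennreal (W2 (\<sigma> \<omega>) \<omega>)"
    using supersolution_ge[OF super \<sigma> bounded_stopping_time_const[OF filt T] \<sigma>_le]
    unfolding R2_def I2_def by simp
  have "AE \<omega> in M. R1 \<omega> + I1 \<omega> \<le> (R2 \<omega> + I2 \<omega>) + (R1 \<omega> + IB \<omega>)"
    using nn_integral_g1_le AE_space
  proof eventually_elim
    case (elim \<omega>)
    then have "I1 \<omega> \<le> I2 \<omega> + IB \<omega>" unfolding I1_def I2_def IB_def using \<sigma>_nonneg by blast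
    then have "R1 \<omega> + I1 \<omega> \<le> I2 \<omega> + (R1 \<omega> + IB \<omega>)" by (metis add_left_mono add.left_commute)
    also have "\<dots> \<le> (R2 \<omega> + I2 \<omega>) + (R1 \<omega> + IB \<omega>)" by (intro add_right_mono add_increasing) simp_all
    finally show ?case .
  qed
  moreover have "0 \<le> W2 (\<sigma> \<omega>) \<omega>" if "\<omega> \<in> space M" for \<omega>
    using supersolution_nonneg[OF super \<sigma>_nonneg[OF that] that] .
  ultimately have "AE \<omega> in M. ennreal (max 0 (W1 (\<sigma> \<omega>) \<omega> - W2 (\<sigma> \<omega>) \<omega>))
      \<le> nn_cond_exp M ?G (\<lambda>\<omega>. R1 \<omega> + IB \<omega>) \<omega>"
    by (intro G.nn_cond_exp_pos_diff_le[OF _ _ _ _ sub_T super_T]) measurable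
  then show ?thesis unfolding gap_def R1_def IB_def .
qed

lemma expected_gap_stopped_le:
  assumes \<sigma>: "bounded_stopping_time M F \<sigma>" and T: "0 \<le> T" and \<sigma>_le: "\<And>\<omega>. \<omega> \<in> space M \<Longrightarrow> \<sigma> \<omega> \<le> T"
  shows "(\<integral>\<^sup>+ \<omega>. ennreal (gap (\<sigma> \<omega>) \<omega>) \<partial>M) \<le> (\<integral>\<^sup>+ \<omega>. ennreal (rlim W1 T \<omega>) \<partial>M)
    + (\<integral>\<^sup>+ \<omega>. (\<integral>\<^sup>+ r\<in>{\<sigma> \<omega>..T}. ennreal (\<beta> r * gap r \<omega>) \<partial>lborel) \<partial>M)"
proof -
  have \<sigma>_stop: "stopping_time_on M F \<sigma>" using \<sigma> unfolding bounded_stopping_time_def by blast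
  interpret G: sigma_finite_subalgebra M "stopped_sigma M F \<sigma>"
    by (rule sigma_finite_subalgebra_stopped_sigma) (rule prob_space_axioms)
  have [measurable]: "(\<lambda>\<omega>. rlim W1 T \<omega>) \<in> borel_measurable M"
    using measurable_rlim_W1_at[of "\<lambda>_. T"] T by simp
  have [measurable]: "(\<lambda>\<omega>. \<integral>\<^sup>+ r\<in>{\<sigma> \<omega>..T}. ennreal (\<beta> r * gap r \<omega>) \<partial>lborel) \<in> borel_measurable M"
    by (rule borel_measurable_nn_integral_interval[OF joint_measurable_weighted_gap
          borel_measurable_stopping_time_on[OF filt \<sigma>_stop] _ stopping_time_on_nonneg[OF \<sigma>_stop]])
      simp
  have "(\<integral>\<^sup>+ \<omega>. ennreal (gap (\<sigma> \<omega>) \<omega>) \<partial>M) \<le> (\<integral>\<^sup>+ \<omega>. nn_cond_exp M (stopped_sigma M F \<sigma>)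
    (\<lambda>\<omega>. ennreal (rlim W1 T \<omega>) + (\<integral>\<^sup>+ r\<in>{\<sigma> \<omega>..T}. ennreal (\<beta> r * gap r \<omega>) \<partial>lborel)) \<omega> \<partial>M)"
    by (rule nn_integral_mono_AE[OF gap_stopped_le_cond_exp[OF assms]])
  also have "\<dots> = (\<integral>\<^sup>+ \<omega>. ennreal (rlim W1 T \<omega>) + (\<integral>\<^sup>+ r\<in>{\<sigma> \<omega>..T}. ennreal (\<beta> r * gap r \<omega>) \<partial>lborel) \<partial>M)"
    using G.nn_cond_exp_intg[of "\<lambda>_. 1"] by simp
  also have "\<dots> = (\<integral>\<^sup>+ \<omega>. ennreal (rlim W1 T \<omega>) \<partial>M)
    + (\<integral>\<^sup>+ \<omega>. (\<integral>\<^sup>+ r\<in>{\<sigma> \<omega>..T}. ennreal (\<beta> r * gap r \<omega>) \<partial>lborel) \<partial>M)"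
    by (rule nn_integral_add) measurable
  finally show ?thesis .
qed

lemma nn_integral_weighted_gap_Fubini:
  assumes "0 \<le> a"
  shows "(\<integral>\<^sup>+ \<omega>. (\<integral>\<^sup>+ r\<in>{a..T}. ennreal (\<beta> r * gap r \<omega>) \<partial>lborel) \<partial>M)
    = (\<integral>\<^sup>+ r\<in>{a..T}. ennreal (\<beta> r) * expected_gap r \<partial>lborel)"
proof -
  have "(\<integral>\<^sup>+ \<omega>. (\<integral>\<^sup>+ r\<in>{a..T}. ennreal (\<beta> r * gap r \<omega>) \<partial>lborel) \<partial>M)
      = (\<integral>\<^sup>+ r\<in>{a..T}. (\<integral>\<^sup>+ \<omega>. ennreal (\<beta> r * gap r \<omega>) \<partial>M) \<partial>lborel)"
    using assms by (intro nn_integral_joint_Fubini prob_space_imp_sigma_finite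
        joint_measurable_weighted_gap prob_space_axioms) auto
  also have "\<dots> = (\<integral>\<^sup>+ r\<in>{a..T}. ennreal (\<beta> r) * expected_gap r \<partial>lborel)"
  proof (intro nn_integral_cong)
    fix r
    have "(\<integral>\<^sup>+ \<omega>. ennreal (\<beta> r * gap r \<omega>) \<partial>M) = ennreal (\<beta> r) * expected_gap r" if "0 \<le> r"
      unfolding expected_gap_def using \<beta>_nonneg measurable_gap_at[of "\<lambda>_. r"] that
      by (simp add: ennreal_mult' nn_integral_cmult)
    then show "(\<integral>\<^sup>+ \<omega>. ennreal (\<beta> r * gap r \<omega>) \<partial>M) * indicator {a..T} r
        = ennreal (\<beta> r) * expected_gap r * indicator {a..T} r"
      using assms by (auto split: split_indicator)
  qed
  finally show ?thesis .
qed

lemma expected_gap_le_tail: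
  assumes \<sigma>: "bounded_stopping_time M F \<sigma>" and a: "0 \<le> a" "\<And>\<omega>. \<omega> \<in> space M \<Longrightarrow> a \<le> \<sigma> \<omega>"
  shows "(\<integral>\<^sup>+ \<omega>. ennreal (gap (\<sigma> \<omega>) \<omega>) \<partial>M) \<le> (\<integral>\<^sup>+ r\<in>{a..}. ennreal (\<beta> r) * expected_gap r \<partial>lborel)"
proof (rule ennreal_le_epsilon)
  fix e :: real assume "0 < e"
  then have "Limsup at_top (\<lambda>t. \<integral>\<^sup>+ \<omega>. ennreal (rlim W1 t \<omega>) \<partial>M) < ennreal e"
    using subsolution_Limsup[OF sub] by (simp add: le_less_trans)
  then have "\<forall>\<^sub>F T in at_top. (\<integral>\<^sup>+ \<omega>. ennreal (rlim W1 T \<omega>) \<partial>M) < ennreal e"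
    by (rule Limsup_lessD)
  then obtain N where N: "\<And>T. N \<le> T \<Longrightarrow> (\<integral>\<^sup>+ \<omega>. ennreal (rlim W1 T \<omega>) \<partial>M) < ennreal e"
    unfolding eventually_at_top_linorder by blast
  obtain C where C: "\<And>\<omega>. \<omega> \<in> space M \<Longrightarrow> \<sigma> \<omega> \<le> C"
    using \<sigma> unfolding bounded_stopping_time_def by blast
  define T where "T = max N (max C a)"
  have T: "0 \<le> T" "N \<le> T" using a(1) by (simp_all add: T_def)
  have \<sigma>_T: "\<sigma> \<omega> \<le> T" if "\<omega> \<in> space M" for \<omega>
    using C[OF that] by (simp add: T_def le_max_iff_disj)
  have "(\<integral>\<^sup>+ \<omega>. ennreal (gap (\<sigma> \<omega>) \<omega>) \<partial>M) \<le> (\<integral>\<^sup>+ \<omega>. ennreal (rlim W1 T \<omega>) \<partial>M)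
    + (\<integral>\<^sup>+ \<omega>. (\<integral>\<^sup>+ r\<in>{\<sigma> \<omega>..T}. ennreal (\<beta> r * gap r \<omega>) \<partial>lborel) \<partial>M)"
    by (rule expected_gap_stopped_le[OF \<sigma> T(1) \<sigma>_T])
  also have "(\<integral>\<^sup>+ \<omega>. ennreal (rlim W1 T \<omega>) \<partial>M) \<le> ennreal e" using N[OF T(2)] by simp
  also have "(\<integral>\<^sup>+ \<omega>. (\<integral>\<^sup>+ r\<in>{\<sigma> \<omega>..T}. ennreal (\<beta> r * gap r \<omega>) \<partial>lborel) \<partial>M)
      \<le> (\<integral>\<^sup>+ \<omega>. (\<integral>\<^sup>+ r\<in>{a..T}. ennreal (\<beta> r * gap r \<omega>) \<partial>lborel) \<partial>M)"
  proof (rule nn_integral_mono)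
    fix \<omega> assume "\<omega> \<in> space M"
    then have "a \<le> \<sigma> \<omega>" by (rule a(2))
    then show "(\<integral>\<^sup>+ r\<in>{\<sigma> \<omega>..T}. ennreal (\<beta> r * gap r \<omega>) \<partial>lborel)
        \<le> (\<integral>\<^sup>+ r\<in>{a..T}. ennreal (\<beta> r * gap r \<omega>) \<partial>lborel)"
      by (intro nn_integral_mono) (auto split: split_indicator)
  qed
  also have "\<dots> = (\<integral>\<^sup>+ r\<in>{a..T}. ennreal (\<beta> r) * expected_gap r \<partial>lborel)"
    by (rule nn_integral_weighted_gap_Fubini[OF a(1)])
  also have "\<dots> \<le> (\<integral>\<^sup>+ r\<in>{a..}. ennreal (\<beta> r) * expected_gap r \<partial>lborel)"
    by (intro nn_integral_mono) (auto split: split_indicator)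
  finally show "(\<integral>\<^sup>+ \<omega>. ennreal (gap (\<sigma> \<omega>) \<omega>) \<partial>M)
      \<le> (\<integral>\<^sup>+ r\<in>{a..}. ennreal (\<beta> r) * expected_gap r \<partial>lborel) + ennreal e"
    by (simp add: add.commute add_mono)
qed

lemma expected_gap_eq_0:
  assumes gap_bounded: "\<And>t. 0 \<le> t \<Longrightarrow> expected_gap t \<le> ennreal C"
    and \<beta>_le: "\<And>r. 0 \<le> r \<Longrightarrow> \<beta> r \<le> b"
    and \<beta>_finite: "(\<integral>\<^sup>+ r\<in>{0..}. ennreal (\<beta> r) \<partial>lborel) < \<infinity>"
  shows "0 \<le> t \<Longrightarrow> expected_gap t = 0"
proof (rule backward_gronwall[OF \<beta>_meas \<beta>_le \<beta>_finite gap_bounded])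
  fix t :: real assume "0 \<le> t"
  then show "expected_gap t \<le> (\<integral>\<^sup>+ r\<in>{t..}. ennreal (\<beta> r) * expected_gap r \<partial>lborel)"
    using expected_gap_le_tail[OF bounded_stopping_time_const[OF filt], of t t]
    unfolding expected_gap_def by simp
qed

lemma AE_gap_stopped_eq_0:
  assumes gap_0: "\<And>r. 0 \<le> r \<Longrightarrow> expected_gap r = 0" and \<sigma>: "bounded_stopping_time M F \<sigma>"
  shows "AE \<omega> in M. gap (\<sigma> \<omega>) \<omega> = 0"
proof -
  have \<sigma>_stop: "stopping_time_on M F \<sigma>" using \<sigma> unfolding bounded_stopping_time_def by blast
  have "(\<integral>\<^sup>+ \<omega>. ennreal (gap (\<sigma> \<omega>) \<omega>) \<partial>M) \<le> (\<integral>\<^sup>+ r\<in>{0..}. ennreal (\<beta> r) * expected_gap r \<partial>lborel)"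
    by (rule expected_gap_le_tail[OF \<sigma>]) (simp_all add: stopping_time_on_nonneg[OF \<sigma>_stop])
  also have "\<dots> = (\<integral>\<^sup>+ r. 0 \<partial>(lborel :: real measure))"
    by (intro nn_integral_cong) (auto simp: gap_0 split: split_indicator)
  finally have integral_0: "(\<integral>\<^sup>+ \<omega>. ennreal (gap (\<sigma> \<omega>) \<omega>) \<partial>M) = 0" by simp
  have [measurable]: "(\<lambda>\<omega>. gap (\<sigma> \<omega>) \<omega>) \<in> borel_measurable M"
    by (rule measurable_gap_at[OF borel_measurable_stopping_time_on[OF filt \<sigma>_stop]
          stopping_time_on_nonneg[OF \<sigma>_stop]])
  have "AE \<omega> in M. ennreal (gap (\<sigma> \<omega>) \<omega>) = 0"
    using integral_0 nn_integral_0_iff_AE[of "\<lambda>\<omega>. ennreal (gap (\<sigma> \<omega>) \<omega>)" M] by simp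
  then show ?thesis
  proof eventually_elim
    case (elim \<omega>)
    then have "gap (\<sigma> \<omega>) \<omega> \<le> 0" by (simp only: ennreal_eq_0_iff)
    then show ?case by (intro antisym) (simp_all add: gap_def)
  qed
qed

theorem AE_sub_le_super:
  assumes gap_bounded: "\<And>t. 0 \<le> t \<Longrightarrow> expected_gap t \<le> ennreal C"
    and \<beta>_le: "\<And>r. 0 \<le> r \<Longrightarrow> \<beta> r \<le> b"
    and \<beta>_finite: "(\<integral>\<^sup>+ r\<in>{0..}. ennreal (\<beta> r) \<partial>lborel) < \<infinity>"
    and \<sigma>: "stopping_time_on M F \<sigma>"
  shows "AE \<omega> in M. W1 (\<sigma> \<omega>) \<omega> \<le> W2 (\<sigma> \<omega>) \<omega>"
proof -
  have gap_0: "expected_gap r = 0" if "0 \<le> r" for r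
    using expected_gap_eq_0 gap_bounded \<beta>_le \<beta>_finite that by blast
  have "AE \<omega> in M. \<forall>n. gap (min (\<sigma> \<omega>) (real n)) \<omega> = 0"
    unfolding AE_all_countable
    by (intro allI AE_gap_stopped_eq_0[OF gap_0] bounded_stopping_time_min[OF filt \<sigma>]) simp_all
  then show ?thesis
  proof eventually_elim
    case (elim \<omega>)
    obtain n :: nat where "\<sigma> \<omega> \<le> real n" using real_arch_simple by blast
    then show ?case using elim[rule_format, of n] by (simp add: gap_def)
  qed
qed

end

section \<open>The Epstein--Zin aggregator\<close>

lemma hEZ_one_sided_lipschitz:
  assumes \<theta>: "1 < \<theta>" and c: "0 < c" and \<Lambda>: "0 < \<Lambda> t \<omega>"
    and u: "0 \<le> u1" "u1 \<le> u2" "u2 \<le> \<Lambda> t \<omega>" and w1: "0 \<le> w1"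
    and w2_ge: "c * (exp (\<nu> * t) * \<Lambda> t \<omega> powr \<theta>) \<le> w2" and \<epsilon>: "0 \<le> \<epsilon>1" "\<epsilon>1 \<le> \<epsilon>2"
  shows "hEZ \<theta> \<epsilon>1 \<nu> \<Lambda> t \<omega> u1 w1
    \<le> hEZ \<theta> \<epsilon>2 \<nu> \<Lambda> t \<omega> u2 w2 + (c * exp (\<nu> * t)) powr (-1/\<theta>) * max 0 (w1 - w2)"
proof -
  define \<rho> where "\<rho> = (\<theta> - 1) / \<theta>"
  define l where "l = \<Lambda> t \<omega>"
  define L where "L = (c * exp (\<nu> * t)) powr (-1/\<theta>)"
  have \<rho>: "0 \<le> \<rho>" "\<rho> - 1 = -1/\<theta>" using \<theta> by (auto simp: \<rho>_def field_simps)
  have l: "0 < l" using \<Lambda> by (simp add: l_def)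
  have w2: "c * exp (\<nu> * t) * l powr \<theta> \<le> w2" using w2_ge by (simp add: l_def mult.assoc)
  have "0 < c * exp (\<nu> * t) * l powr \<theta>" using c l by simp
  with w2 have w2_pos: "0 < w2" by linarith
  \<comment> \<open>by concavity \<open>l w2\<^sup>\<rho>\<^sup>-\<^sup>1\<close> bounds the slope of \<open>w \<mapsto> l w\<^sup>\<rho>\<close> on \<open>[w2, \<infinity>)\<close>\<close>
  have lipschitz: "l * w2 powr (\<rho> - 1) \<le> L"
  proof -
    have "w2 powr (-1/\<theta>) \<le> (c * exp (\<nu> * t) * l powr \<theta>) powr (-1/\<theta>)"
      using \<theta> c l w2 by (intro powr_mono2') (auto simp: l_def)
    also have "\<dots> = L * (l powr \<theta>) powr (-1/\<theta>)"
      using c l by (simp add: L_def powr_mult)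
    also have "(l powr \<theta>) powr (-1/\<theta>) = 1 / l"
      using \<theta> l by (simp add: powr_powr powr_minus_divide)
    finally show ?thesis using l unfolding \<rho>(2) by (simp add: field_simps)
  qed
  have \<epsilon>_term: "\<epsilon>1 * exp (\<nu> * t) * l powr \<theta> \<le> \<epsilon>2 * exp (\<nu> * t) * l powr \<theta>"
    using \<epsilon> by (intro mult_right_mono) auto
  have "u1 * w1 powr \<rho> \<le> u2 * w2 powr \<rho> + L * max 0 (w1 - w2)"
  proof (cases "w1 \<le> w2")
    case True
    have "u1 * w1 powr \<rho> \<le> u2 * w2 powr \<rho>"
      using u w1 \<rho> True by (intro mult_mono powr_mono2) auto
    moreover have "0 \<le> L" by (simp add: L_def)
    ultimately show ?thesis using True by simp
  next
    case False
    then have w12: "w2 < w1" by simp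
    have "u1 * w1 powr \<rho> \<le> u2 * (w1 * w1 powr (\<rho> - 1))"
      using u w12 w2_pos by (intro mult_mono) (auto simp: powr_mult_base)
    also have "\<dots> \<le> u2 * (w1 * w2 powr (\<rho> - 1))"
      using u w1 \<rho> w12 w2_pos \<theta> by (intro mult_left_mono powr_mono2') auto
    also have "\<dots> = u2 * w2 powr \<rho> + u2 * w2 powr (\<rho> - 1) * (w1 - w2)"
      using w2_pos by (simp add: powr_mult_base algebra_simps)
    also have "u2 * w2 powr (\<rho> - 1) * (w1 - w2) \<le> l * w2 powr (\<rho> - 1) * (w1 - w2)"
      using u w12 unfolding l_def by (intro mult_right_mono) auto
    also have "\<dots> \<le> L * (w1 - w2)"
      using lipschitz w12 by (intro mult_right_mono) auto
    finally show ?thesis using w12 by simp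
  qed
  then have "u1 * w1 powr \<rho> + \<epsilon>1 * exp (\<nu> * t) * l powr \<theta>
      \<le> (u2 * w2 powr \<rho> + \<epsilon>2 * exp (\<nu> * t) * l powr \<theta>) + L * max 0 (w1 - w2)"
    using \<epsilon>_term by linarith
  then show ?thesis unfolding hEZ_def \<rho>_def L_def l_def .
qed

lemma exp_decay_powr:
  assumes c: "0 < c" and \<nu>: "0 < \<nu>" and \<theta>: "0 < \<theta>"
  shows exp_decay_powr_le: "0 \<le> r \<Longrightarrow> (c * exp (\<nu> * r)) powr (-1/\<theta>) \<le> c powr (-1/\<theta>)"
    and exp_decay_powr_finite:
      "(\<integral>\<^sup>+ r\<in>{0..}. ennreal ((c * exp (\<nu> * r)) powr (-1/\<theta>)) \<partial>lborel) < \<infinity>"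
proof -
  have eq: "(c * exp (\<nu> * r)) powr (-1/\<theta>) = c powr (-1/\<theta>) * exp (- (\<nu> / \<theta>) * r)" for r
    using c by (simp add: powr_mult exp_powr_real field_simps)
  show "0 \<le> r \<Longrightarrow> (c * exp (\<nu> * r)) powr (-1/\<theta>) \<le> c powr (-1/\<theta>)"
    unfolding eq using \<nu> \<theta> by (auto intro!: mult_left_le divide_nonneg_pos)
  have "((\<lambda>r. c powr (-1/\<theta>) * exp (- (\<nu> / \<theta>) * r))
      has_integral c powr (-1/\<theta>) * (exp (- (\<nu> / \<theta>) * 0) / (\<nu> / \<theta>))) {0..}"
    using \<nu> \<theta> by (intro has_integral_mult_right has_integral_exp_minus_to_infinity) simp
  then show "(\<integral>\<^sup>+ r\<in>{0..}. ennreal ((c * exp (\<nu> * r)) powr (-1/\<theta>)) \<partial>lborel) < \<infinity>"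
    unfolding eq by (subst nn_integral_has_integral_lebesgue') auto
qed

lemma joint_measurable_hEZ:
  assumes filt: "std_filtration M F" and "progressive M F U" "optional M F W" "progressive M F \<Lambda>"
  shows "joint (\<lambda>r \<omega>. hEZ \<theta> \<epsilon> \<nu> \<Lambda> r \<omega> (U r \<omega>) (W r \<omega>)) \<in> borel_measurable (M \<Otimes>\<^sub>M lborel)"
proof -
  have [measurable]: "joint U \<in> borel_measurable (M \<Otimes>\<^sub>M lborel)"
    "joint W \<in> borel_measurable (M \<Otimes>\<^sub>M lborel)" "joint \<Lambda> \<in> borel_measurable (M \<Otimes>\<^sub>M lborel)"
    using assms joint_measurable_progressive joint_measurable_optional by blast+
  have "joint (\<lambda>r \<omega>. hEZ \<theta> \<epsilon> \<nu> \<Lambda> r \<omega> (U r \<omega>) (W r \<omega>)) = (\<lambda>p. joint U p * joint W p powr ((\<theta> - 1) / \<theta>)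
      + \<epsilon> * exp (\<nu> * max (snd p) 0) * joint \<Lambda> p powr \<theta>)"
    by (auto simp: joint_def hEZ_def)
  then show ?thesis by simp
qed

lemma AE_AE_lborel_hEZ_bounds:
  assumes filt: "std_filtration M F" and \<Lambda>: "progressive M F \<Lambda>"
    and U1: "progressive M F U1" and U2: "progressive M F U2" and W2: "optional M F W2"
    and U12: "\<And>t. 0 \<le> t \<Longrightarrow> AE \<omega> in M. U1 t \<omega> \<le> U2 t \<omega> \<and> U2 t \<omega> \<le> \<Lambda> t \<omega>"
    and W2_ge: "\<And>t. 0 \<le> t \<Longrightarrow> AE \<omega> in M. c * (exp (\<nu> * t) * \<Lambda> t \<omega> powr \<theta>) \<le> W2 t \<omega>"
  shows "AE \<omega> in M. AE r in lborel. 0 \<le> r \<longrightarrow> U1 r \<omega> \<le> U2 r \<omega> \<and> U2 r \<omega> \<le> \<Lambda> r \<omega>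
      \<and> c * (exp (\<nu> * r) * \<Lambda> r \<omega> powr \<theta>) \<le> W2 r \<omega>"
proof (rule AE_AE_lborel_of_AE)
  show "sigma_finite_measure M"
    by (rule prob_space_imp_sigma_finite[OF std_filtration_prob_space[OF filt]])
  have [measurable]: "joint U1 \<in> borel_measurable (M \<Otimes>\<^sub>M lborel)" "joint U2 \<in> borel_measurable (M \<Otimes>\<^sub>M lborel)"
    "joint W2 \<in> borel_measurable (M \<Otimes>\<^sub>M lborel)" "joint \<Lambda> \<in> borel_measurable (M \<Otimes>\<^sub>M lborel)"
    using joint_measurable_progressive[OF filt] joint_measurable_optional[OF filt W2] U1 U2 \<Lambda> by blast+
  have "Measurable.pred (M \<Otimes>\<^sub>M lborel) (\<lambda>p. joint U1 p \<le> joint U2 p \<and> joint U2 p \<le> joint \<Lambda> p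
      \<and> c * (exp (\<nu> * max (snd p) 0) * joint \<Lambda> p powr \<theta>) \<le> joint W2 p)"
    by measurable
  then show "Measurable.pred (M \<Otimes>\<^sub>M lborel) (\<lambda>(\<omega>, r). U1 (max r 0) \<omega> \<le> U2 (max r 0) \<omega>
      \<and> U2 (max r 0) \<omega> \<le> \<Lambda> (max r 0) \<omega> \<and> c * (exp (\<nu> * max r 0) * \<Lambda> (max r 0) \<omega> powr \<theta>) \<le> W2 (max r 0) \<omega>)"
    by (simp add: joint_def case_prod_beta')
next
  fix t :: real assume t: "0 \<le> t"
  from U12[OF t] W2_ge[OF t] show "AE \<omega> in M. U1 t \<omega> \<le> U2 t \<omega> \<and> U2 t \<omega> \<le> \<Lambda> t \<omega>
      \<and> c * (exp (\<nu> * t) * \<Lambda> t \<omega> powr \<theta>) \<le> W2 t \<omega>"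
    by eventually_elim simp
qed

lemma sub_super_pair_hEZ:
  assumes filt: "std_filtration M F" and \<theta>: "1 < \<theta>" and c: "0 < c"
    and \<Lambda>: "progressive_pos M F \<Lambda>" and U1: "progressive_nonneg M F U1" and U2: "progressive M F U2"
    and U12: "\<And>t. 0 \<le> t \<Longrightarrow> AE \<omega> in M. U1 t \<omega> \<le> U2 t \<omega> \<and> U2 t \<omega> \<le> \<Lambda> t \<omega>"
    and sub: "subsolution M F (hEZ \<theta> \<epsilon>1 \<nu> \<Lambda>) U1 W1"
    and super: "supersolution M F (hEZ \<theta> \<epsilon>2 \<nu> \<Lambda>) U2 W2"
    and W2_ge: "\<And>t. 0 \<le> t \<Longrightarrow> AE \<omega> in M. c * (exp (\<nu> * t) * \<Lambda> t \<omega> powr \<theta>) \<le> W2 t \<omega>"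
    and \<epsilon>: "0 \<le> \<epsilon>1" "\<epsilon>1 \<le> \<epsilon>2"
  shows "sub_super_pair M F (hEZ \<theta> \<epsilon>1 \<nu> \<Lambda>) (hEZ \<theta> \<epsilon>2 \<nu> \<Lambda>) U1 U2 W1 W2
    (\<lambda>r. (c * exp (\<nu> * r)) powr (-1/\<theta>))"
proof
  have \<Lambda>_prog: "progressive M F \<Lambda>" and \<Lambda>_pos: "\<And>t \<omega>. 0 \<le> t \<Longrightarrow> \<omega> \<in> space M \<Longrightarrow> 0 < \<Lambda> t \<omega>"
    and U1_prog: "progressive M F U1" and U1_nonneg: "\<And>t \<omega>. 0 \<le> t \<Longrightarrow> \<omega> \<in> space M \<Longrightarrow> 0 \<le> U1 t \<omega>"
    using \<Lambda> U1 unfolding progressive_pos_def progressive_nonneg_def by auto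
  note W1_nonneg = subsolution_nonneg[OF sub]
  show "joint (\<lambda>r \<omega>. hEZ \<theta> \<epsilon>1 \<nu> \<Lambda> r \<omega> (U1 r \<omega>) (W1 r \<omega>)) \<in> borel_measurable (M \<Otimes>\<^sub>M lborel)"
    by (rule joint_measurable_hEZ[OF filt U1_prog subsolution_optional[OF sub] \<Lambda>_prog])
  show "joint (\<lambda>r \<omega>. hEZ \<theta> \<epsilon>2 \<nu> \<Lambda> r \<omega> (U2 r \<omega>) (W2 r \<omega>)) \<in> borel_measurable (M \<Otimes>\<^sub>M lborel)"
    by (rule joint_measurable_hEZ[OF filt U2 supersolution_optional[OF super] \<Lambda>_prog])
  show "(\<lambda>r. (c * exp (\<nu> * r)) powr (-1/\<theta>)) \<in> borel_measurable borel" by measurable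
  have "AE \<omega> in M. AE r in lborel. 0 \<le> r \<longrightarrow> U1 r \<omega> \<le> U2 r \<omega> \<and> U2 r \<omega> \<le> \<Lambda> r \<omega>
      \<and> c * (exp (\<nu> * r) * \<Lambda> r \<omega> powr \<theta>) \<le> W2 r \<omega>"
    by (rule AE_AE_lborel_hEZ_bounds[OF filt \<Lambda>_prog U1_prog U2 supersolution_optional[OF super]])
      (use U12 W2_ge in auto)
  with AE_space show "AE \<omega> in M. AE r in lborel. 0 \<le> r \<longrightarrow> hEZ \<theta> \<epsilon>1 \<nu> \<Lambda> r \<omega> (U1 r \<omega>) (W1 r \<omega>)
    \<le> hEZ \<theta> \<epsilon>2 \<nu> \<Lambda> r \<omega> (U2 r \<omega>) (W2 r \<omega>) + (c * exp (\<nu> * r)) powr (-1/\<theta>) * max 0 (W1 r \<omega> - W2 r \<omega>)"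
  proof eventually_elim
    case (elim \<omega>)
    note \<omega> = elim(1)
    from elim(2) show ?case
    proof eventually_elim
      case (elim r)
      show ?case
      proof
        assume r: "0 \<le> r"
        with elim have "U1 r \<omega> \<le> U2 r \<omega>" "U2 r \<omega> \<le> \<Lambda> r \<omega>" "c * (exp (\<nu> * r) * \<Lambda> r \<omega> powr \<theta>) \<le> W2 r \<omega>"
          by simp_all
        then show "hEZ \<theta> \<epsilon>1 \<nu> \<Lambda> r \<omega> (U1 r \<omega>) (W1 r \<omega>) \<le> hEZ \<theta> \<epsilon>2 \<nu> \<Lambda> r \<omega> (U2 r \<omega>) (W2 r \<omega>)
            + (c * exp (\<nu> * r)) powr (-1/\<theta>) * max 0 (W1 r \<omega> - W2 r \<omega>)"
          by (intro hEZ_one_sided_lipschitz[where \<Lambda>=\<Lambda> and t=r and \<omega>=\<omega>, OF \<theta> c \<Lambda>_pos[OF r \<omega>]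
                U1_nonneg[OF r \<omega>] _ _ W1_nonneg[OF r \<omega>] _ \<epsilon>])
      qed
    qed
  qed
qed (simp_all add: filt sub super)

theorem corollary6p3:
  fixes M :: "'a measure" and F :: "real \<Rightarrow> 'a measure"
    and \<theta> \<nu> \<epsilon>1 \<epsilon>2 :: real
    and \<Lambda> U1 U2 W1 W2 :: "real \<Rightarrow> 'a \<Rightarrow> real"
    and \<sigma> :: "'a \<Rightarrow> real"
  assumes filt: "std_filtration M F"
    and theta: "\<theta> > 1"
    and nu: "\<nu> > 0"
    and Lam: "progressive_pos M F \<Lambda>"
    and LamSO: "SO_nu M F \<nu> (\<lambda>t \<omega>. \<Lambda> t \<omega> powr \<theta>)"
    and eps: "\<epsilon>2 > 0" "0 \<le> \<epsilon>1" "\<epsilon>1 \<le> \<epsilon>2"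
    and U1: "progressive_nonneg M F U1" and U2: "progressive_nonneg M F U2"
    and U12: "\<forall>t\<ge>0. AE \<omega> in M. U1 t \<omega> \<le> U2 t \<omega> \<and> U2 t \<omega> \<le> \<Lambda> t \<omega>"
    and sub: "subsolution M F (hEZ \<theta> \<epsilon>1 \<nu> \<Lambda>) U1 W1"
    and super: "supersolution M F (hEZ \<theta> \<epsilon>2 \<nu> \<Lambda>) U2 W2"
    and condA: "conditionA M F (hEZ \<theta> \<epsilon>1 \<nu> \<Lambda>) U1 W1 W2"
    and stop: "stopping_time_on M F \<sigma>"
  shows "AE \<omega> in M. W1 (\<sigma> \<omega>) \<omega> \<le> W2 (\<sigma> \<omega>) \<omega>"
proof -
  have U2_prog: "progressive M F U2" using U2 unfolding progressive_nonneg_def by blast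
  have "\<epsilon>2 * (exp (\<nu> * r) * \<Lambda> r \<omega> powr \<theta>) \<le> hEZ \<theta> \<epsilon>2 \<nu> \<Lambda> r \<omega> (U2 r \<omega>) (W2 r \<omega>)"
    if "0 \<le> r" "\<omega> \<in> space M" for r \<omega>
    using U2 that unfolding hEZ_def progressive_nonneg_def by (simp add: mult.assoc)
  then obtain c where c: "0 < c" "\<forall>s\<ge>0. AE \<omega> in M. c * (exp (\<nu> * s) * \<Lambda> s \<omega> powr \<theta>) \<le> W2 s \<omega>"
    using supersolution_ge_SO[OF filt super joint_measurable_hEZ[OF filt U2_prog _ _] _ eps(1)]
      supersolution_optional[OF super] Lam LamSO unfolding SO_nu_def progressive_pos_def by blast
  interpret sub_super_pair M F "hEZ \<theta> \<epsilon>1 \<nu> \<Lambda>" "hEZ \<theta> \<epsilon>2 \<nu> \<Lambda>" U1 U2 W1 W2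
    "\<lambda>r. (c * exp (\<nu> * r)) powr (-1/\<theta>)"
    using sub_super_pair_hEZ[OF filt theta c(1) Lam U1 U2_prog U12[rule_format] sub super
        c(2)[rule_format] eps(2,3)] .
  obtain C where "\<And>t. 0 \<le> t \<Longrightarrow> expected_gap t \<le> ennreal C"
    using condA unfolding conditionA_def expected_gap_def gap_def by blast
  moreover have "0 < \<theta>" using theta by simp
  ultimately show ?thesis
    using AE_sub_le_super exp_decay_powr_le[OF c(1) nu] exp_decay_powr_finite[OF c(1) nu] stop by blast
qed

end
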